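(* Under the standing assumptions below: (1) If $\gamma>0$ and $\omega_0>0$, the normalized stationary solution $w_\infty$ (the Gaussian below) is an equilibrium state, i.e. its current $J_\infty(x):=\int_{\mathbb R^d}(\xi-D_{qq}\nabla_x)w_\infty(x,\xi)\,d\xi$ vanishes for all $x\in\mathbb R^d$. (2) If $\omega_0=0$ or $\gamma=0$ (or both), then there is no stationary solution $w\in L^1(\mathbb R^d_x\times\mathbb R^d_\xi)$ of the harmonic QFP equation with $\iint w\,dx\,d\xi=1$.
   Context: Standing setting (units $\hbar=m=1$, $d\ge1$): the stationary harmonic quantum Fokker–Planck equation $$\xi\cdot\nabla_x w-\omega_0^2 x\cdot\nabla_\xi w=D_{pp}\Delta_\xi w+2\gamma\,\mathrm{div}_\xi(\xi w)+D_{qq}\Delta_x w+2D_{pq}\,\mathrm{div}_x(\nabla_\xi w),$$ with $\omega_0,\gamma\ge0$, $D_{pp}>0$, $D_{qq},D_{pq}\ge0$, $D_{pp}D_{qq}-D_{pq}^2\ge\gamma^2/4$. For $\gamma,\omega_0>0$, $w_\infty(x,\xi)=\frac{\gamma\omega_0}{(2\pi)^d\sqrt Q}\exp\big(-\frac{\gamma}{Q}[Q_{11}\omega_0^2|x|^2+2Q_{12}\omega_0x\cdot\xi+Q_{22}|\xi|^2]\big)$ with $Q_{11}=D_{pp}+\omega_0^2D_{qq}$, $Q_{12}=2\omega_0\gamma D_{qq}$, $Q_{22}=D_{pp}+\omega_0^2D_{qq}+4\gamma(D_{pq}+\gamma D_{qq})$, $Q=Q_{11}Q_{22}-Q_{12}^2$;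 this is the unique stationary solution of mass one. *)

theory Defs
  imports "HOL-Analysis.Analysis"
begin

fun dd :: "'a::euclidean_space list \<Rightarrow> ('a \<Rightarrow> real) \<Rightarrow> 'a \<Rightarrow> real" where
  "dd [] f = f"
| "dd (v # vs) f = (\<lambda>p. frechet_derivative (dd vs f) (at p) v)"

definition Cinf :: "('a::euclidean_space \<Rightarrow> real) \<Rightarrow> bool" where
  "Cinf f \<longleftrightarrow> (\<forall>vs. (dd vs f) differentiable_on UNIV)"

definition test_fun :: "((real^'n) \<times> (real^'n) \<Rightarrow> real) \<Rightarrow> bool" where
  "test_fun \<phi> \<longleftrightarrow> Cinf \<phi> \<and> compact (closure {p. \<phi> p \<noteq> 0})"

definition ex :: "'n::finite \<Rightarrow> (real^'n) \<times> (real^'n)" where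
  "ex j = (axis j 1, 0)"

definition exi :: "'n::finite \<Rightarrow> (real^'n) \<times> (real^'n)" where
  "exi j = (0, axis j 1)"

text \<open>Formal adjoint of the stationary harmonic QFP operator applied to a test function,
  so that w is a distributional stationary solution iff the integral of w times this vanishes
  for every test function.\<close>
definition QFP_adj ::
  "real \<Rightarrow> real \<Rightarrow> real \<Rightarrow> real \<Rightarrow> real \<Rightarrow>
   ((real^'n::finite) \<times> (real^'n) \<Rightarrow> real) \<Rightarrow> (real^'n) \<times> (real^'n) \<Rightarrow> real" where
  "QFP_adj \<omega>0 \<gamma> Dpp Dqq Dpq \<phi> p =
     (let x = fst p; \<xi> = snd p in
       - (\<Sum>j\<in>UNIV. (\<xi> $ j) * dd [ex j] \<phi> p)
       + \<omega>0\<^sup>2 * (\<Sum>j\<in>UNIV. (x $ j) * dd [exi j] \<phi> p)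
       - Dpp * (\<Sum>j\<in>UNIV. dd [exi j, exi j] \<phi> p)
       + 2 * \<gamma> * (\<Sum>j\<in>UNIV. (\<xi> $ j) * dd [exi j] \<phi> p)
       - Dqq * (\<Sum>j\<in>UNIV. dd [ex j, ex j] \<phi> p)
       - 2 * Dpq * (\<Sum>j\<in>UNIV. dd [ex j, exi j] \<phi> p))"

definition stationary_QFP ::
  "real \<Rightarrow> real \<Rightarrow> real \<Rightarrow> real \<Rightarrow> real \<Rightarrow>
   ((real^'n::finite) \<times> (real^'n) \<Rightarrow> real) \<Rightarrow> bool" where
  "stationary_QFP \<omega>0 \<gamma> Dpp Dqq Dpq w \<longleftrightarrow>
     (\<forall>\<phi>. test_fun \<phi> \<longrightarrow>
        (\<integral>p. w p * QFP_adj \<omega>0 \<gamma> Dpp Dqq Dpq \<phi> p \<partial>lebesgue) = 0)"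

definition w_inf ::
  "real \<Rightarrow> real \<Rightarrow> real \<Rightarrow> real \<Rightarrow> real \<Rightarrow> real^'n::finite \<Rightarrow> real^'n \<Rightarrow> real" where
  "w_inf \<omega>0 \<gamma> Dpp Dqq Dpq x \<xi> =
     (let Q11 = Dpp + \<omega>0\<^sup>2 * Dqq;
          Q12 = 2 * \<omega>0 * \<gamma> * Dqq;
          Q22 = Dpp + \<omega>0\<^sup>2 * Dqq + 4 * \<gamma> * (Dpq + \<gamma> * Dqq);
          Q = Q11 * Q22 - Q12\<^sup>2
      in \<gamma> * \<omega>0 / ((2 * pi) ^ CARD('n) * sqrt Q) *
         exp (- (\<gamma> / Q) * (Q11 * \<omega>0\<^sup>2 * (norm x)\<^sup>2 + 2 * Q12 * \<omega>0 * (x \<bullet> \<xi>)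
                             + Q22 * (norm \<xi>)\<^sup>2)))"

definition grad_x :: "(real^'n::finite \<Rightarrow> real^'n \<Rightarrow> real) \<Rightarrow> real^'n \<Rightarrow> real^'n \<Rightarrow> real^'n" where
  "grad_x w x \<xi> = (\<chi> j. frechet_derivative (\<lambda>y. w y \<xi>) (at x) (axis j 1))"

definition current :: "real \<Rightarrow> (real^'n::finite \<Rightarrow> real^'n \<Rightarrow> real) \<Rightarrow> real^'n \<Rightarrow> real^'n" where
  "current Dqq w x = (\<integral>\<xi>. (w x \<xi> *\<^sub>R \<xi> - Dqq *\<^sub>R grad_x w x \<xi>) \<partial>lborel)"

end

theory Submission
  imports Defs "HOL-Probability.Distributions" "HOL-Computational_Algebra.Polynomial"
begin

(*
  Part (1): completing the square in \<xi>, the current density (\<xi> - Dqq \<nabla>\<^sub>x) w\<^sub>\<infinity>(x, \<xi>) is a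
  multiple of the odd function \<eta> exp(-\<beta> |\<eta>|\<^sup>2) at \<eta> = \<xi> + m(x), because the coefficients
  of w\<^sub>\<infinity> satisfy (Q + 2 Dqq \<gamma> Q12 \<omega>0) Q12 \<omega>0 = 2 Dqq \<gamma> Q11 \<omega>0\<^sup>2 Q22; its integral
  over \<xi> vanishes by the symmetry \<eta> \<mapsto> -\<eta>.

  Part (2): if \<gamma> \<omega>0 = 0, the quadratic form \<Phi>(x, \<xi>) = \<omega>0\<^sup>2 |x|\<^sup>2 + |2\<gamma>x + \<xi>|\<^sup>2 is annihilated by
  the transport part of the adjoint operator L*, and L*\<Phi> is the negative constant
  -d (2 Dpp + Dqq (2 \<omega>0\<^sup>2 + 8 \<gamma>\<^sup>2) + 8 \<gamma> Dpq).  Testing the equation with the smooth compactly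
  supported functions \<Phi> k(\<Phi>/R) k(|p|\<^sup>2/S), where k is a smooth cutoff equal to 1 on (-\<infinity>, 1]
  and to 0 on [2, \<infinity>), and letting first S \<rightarrow> \<infinity> and then R \<rightarrow> \<infinity> by dominated convergence
  gives \<integral> w L*\<Phi> = 0, which contradicts \<integral> w = 1.
*)

section \<open>Gaussian integrals\<close>

lemma integrable_exp_minus_square:
  fixes \<alpha> :: real assumes "\<alpha> > 0"
  shows "integrable lborel (\<lambda>t::real. exp (- \<alpha> * t\<^sup>2))"
proof -
  define \<sigma> where "\<sigma> = sqrt (1 / (2 * \<alpha>))"
  have "(\<lambda>t. sqrt (2 * pi * \<sigma>\<^sup>2) * normal_density 0 \<sigma> t) = (\<lambda>t::real. exp (- \<alpha> * t\<^sup>2))"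
    using assms by (auto simp: normal_density_def \<sigma>_def field_simps)
  moreover have "integrable lborel (\<lambda>t. sqrt (2 * pi * \<sigma>\<^sup>2) * normal_density 0 \<sigma> t)"
    by (intro integrable_mult_right integrable_normal_density) (use assms in \<open>simp add: \<sigma>_def\<close>)
  ultimately show ?thesis by simp
qed

lemma integrable_gaussian:
  fixes \<alpha> :: real assumes "\<alpha> > 0"
  shows "integrable lborel (\<lambda>x::'a::euclidean_space. exp (- \<alpha> * (norm x)\<^sup>2))"
proof (unfold integrable_iff_bounded, intro conjI)
  show "(\<lambda>x::'a. exp (- \<alpha> * (norm x)\<^sup>2)) \<in> borel_measurable lborel" by measurable
  have product: "exp (- \<alpha> * (norm x)\<^sup>2) = (\<Prod>b\<in>Basis. exp (- \<alpha> * (x \<bullet> b)\<^sup>2))" for x :: 'a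
    unfolding power2_norm_eq_inner by (subst euclidean_inner)
      (simp add: power2_eq_square sum_distrib_left exp_sum)
  have "(\<integral>\<^sup>+x. ennreal (norm (exp (- \<alpha> * (norm (x::'a))\<^sup>2))) \<partial>lborel)
      = (\<integral>\<^sup>+x. (\<Prod>b\<in>Basis. ennreal (exp (- \<alpha> * ((x::'a) \<bullet> b)\<^sup>2))) \<partial>lborel)"
    by (rule nn_integral_cong, subst product, subst prod_ennreal) (auto simp: prod_nonneg)
  also have "\<dots> = (\<Prod>b\<in>(Basis::'a set). (\<integral>\<^sup>+t. ennreal (exp (- \<alpha> * t\<^sup>2)) \<partial>lborel))"
    by (rule nn_integral_lborel_prod) auto
  also have "\<dots> < \<infinity>"
    using integrable_exp_minus_square[OF assms]
    by (simp add: integrable_iff_bounded less_top[symmetric] power_eq_top_ennreal)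
  finally show "(\<integral>\<^sup>+x. ennreal (norm (exp (- \<alpha> * (norm (x::'a))\<^sup>2))) \<partial>lborel) < \<infinity>" .
qed

lemma lborel_integral_isometric_affine:
  fixes f :: "'a::euclidean_space \<Rightarrow> 'b::{banach, second_countable_topology}"
  assumes "\<bar>c\<bar> = 1" and [measurable]: "f \<in> borel_measurable borel"
  shows "(\<integral>x. f (t + c *\<^sub>R x) \<partial>lborel) = (\<integral>x. f x \<partial>lborel)"
    and "integrable lborel (\<lambda>x. f (t + c *\<^sub>R x)) \<longleftrightarrow> integrable lborel f"
proof -
  have distr: "distr lborel borel (\<lambda>x. t + c *\<^sub>R x) = (lborel :: 'a measure)"
    using lborel_affine[of c t] assms(1) by (auto simp: density_1)
  show "(\<integral>x. f (t + c *\<^sub>R x) \<partial>lborel) = (\<integral>x. f x \<partial>lborel)"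
    by (subst (2) distr[symmetric], rule integral_distr[symmetric]) measurable
  show "integrable lborel (\<lambda>x. f (t + c *\<^sub>R x)) \<longleftrightarrow> integrable lborel f"
    by (subst (2) distr[symmetric], rule integrable_distr_eq[symmetric]) measurable
qed

lemma norm_le_exp_square:
  fixes \<beta> :: real and \<eta> :: "'a::real_normed_vector" assumes "\<beta> > 0"
  shows "norm \<eta> \<le> (1 + 2 / \<beta>) * exp (\<beta> / 2 * (norm \<eta>)\<^sup>2)"
proof -
  let ?s = "norm \<eta>" and ?E = "exp (\<beta> / 2 * (norm \<eta>)\<^sup>2)"
  have "?s \<le> 1 + ?s\<^sup>2"
  proof -
    have "0 \<le> (?s - 1)\<^sup>2" by simp
    then have "2 * ?s \<le> ?s\<^sup>2 + 1" by (simp add: power2_diff)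
    then show ?thesis using norm_ge_zero[of \<eta>] by linarith
  qed
  moreover have "\<beta> / 2 * ?s\<^sup>2 \<le> ?E"
    using exp_ge_add_one_self[of "\<beta> / 2 * ?s\<^sup>2"] by linarith
  then have "?s\<^sup>2 \<le> 2 / \<beta> * ?E" using assms by (simp add: field_simps)
  moreover have "1 \<le> ?E" using assms by simp
  ultimately have "?s \<le> ?E + 2 / \<beta> * ?E" by linarith
  then show ?thesis by (simp add: distrib_right)
qed

lemma gaussian_first_moment:
  fixes \<beta> :: real assumes "\<beta> > 0"
  shows "integrable lborel (\<lambda>\<eta>::'a::euclidean_space. exp (- \<beta> * (norm \<eta>)\<^sup>2) *\<^sub>R \<eta>)"
    and "(\<integral>\<eta>. exp (- \<beta> * (norm \<eta>)\<^sup>2) *\<^sub>R (\<eta>::'a) \<partial>lborel) = 0"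
proof -
  let ?g = "\<lambda>\<eta>::'a. exp (- \<beta> * (norm \<eta>)\<^sup>2) *\<^sub>R \<eta>"
  have bound: "norm (?g \<eta>) \<le> norm ((1 + 2 / \<beta>) * exp (- (\<beta> / 2) * (norm \<eta>)\<^sup>2))" for \<eta>
  proof -
    have "norm (?g \<eta>) \<le> exp (- \<beta> * (norm \<eta>)\<^sup>2) * ((1 + 2 / \<beta>) * exp (\<beta> / 2 * (norm \<eta>)\<^sup>2))"
      using norm_le_exp_square[OF assms, of \<eta>] by (simp add: mult_left_mono)
    also have "\<dots> = (1 + 2 / \<beta>) * exp (- (\<beta> / 2) * (norm \<eta>)\<^sup>2)"
      by (simp flip: exp_add add: algebra_simps)
    finally show ?thesis using assms by simp
  qed
  have "integrable lborel (\<lambda>\<eta>::'a. (1 + 2 / \<beta>) * exp (- (\<beta> / 2) * (norm \<eta>)\<^sup>2))"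
    using assms by (intro integrable_mult_right integrable_gaussian) simp
  then show "integrable lborel ?g"
    by (rule Bochner_Integration.integrable_bound) (measurable, rule AE_I2, rule bound)
  have "(\<integral>\<eta>. ?g \<eta> \<partial>lborel) = (\<integral>\<eta>. ?g (0 + (-1) *\<^sub>R \<eta>) \<partial>lborel)"
    by (rule lborel_integral_isometric_affine(1)[symmetric]) (simp, measurable)
  also have "\<dots> = (\<integral>\<eta>. - ?g \<eta> \<partial>lborel)" by simp
  also have "\<dots> = - (\<integral>\<eta>. ?g \<eta> \<partial>lborel)" by (rule integral_minus)
  finally have odd: "(\<integral>\<eta>. ?g \<eta> \<partial>lborel) = - (\<integral>\<eta>. ?g \<eta> \<partial>lborel)" .
  have "(\<integral>\<eta>. ?g \<eta> \<partial>lborel) + (\<integral>\<eta>. ?g \<eta> \<partial>lborel) = 0"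
    by (subst (2) odd) (rule right_minus)
  then have "(2::real) *\<^sub>R (\<integral>\<eta>. ?g \<eta> \<partial>lborel) = 0" by (simp only: scaleR_2)
  then show "(\<integral>\<eta>. ?g \<eta> \<partial>lborel) = 0" by simp
qed

section \<open>The Gaussian steady state carries no current\<close>

lemma grad_x_gaussian:
  fixes a b c \<kappa> C :: real
  defines "W \<equiv> \<lambda>(y::real^'n::finite) \<xi>. C * exp (- \<kappa> * (a * (y \<bullet> y) + 2 * b * (y \<bullet> \<xi>) + c * (\<xi> \<bullet> \<xi>)))"
  shows "grad_x W x \<xi> = (- 2 * \<kappa> * W x \<xi>) *\<^sub>R (a *\<^sub>R x + b *\<^sub>R \<xi>)"
proof -
  have derivative: "((\<lambda>y. W y \<xi>) has_derivative (\<lambda>v. - 2 * \<kappa> * W x \<xi> * (a * (x \<bullet> v) + b * (v \<bullet> \<xi>)))) (at x)"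
    unfolding W_def by (auto intro!: derivative_eq_intros ext simp: algebra_simps inner_commute)
  then show ?thesis
    unfolding grad_x_def frechet_derivative_at[OF derivative, symmetric]
    by (simp add: vec_eq_iff inner_axis inner_commute algebra_simps)
qed

lemma current_gaussian_eq_zero:
  fixes a b c \<kappa> C D :: real
  assumes pos: "\<kappa> * c > 0" and balance: "(1 + 2 * D * \<kappa> * b) * b = 2 * D * \<kappa> * a * c"
  defines "W \<equiv> \<lambda>(y::real^'n::finite) \<xi>. C * exp (- \<kappa> * (a * (y \<bullet> y) + 2 * b * (y \<bullet> \<xi>) + c * (\<xi> \<bullet> \<xi>)))"
  shows "integrable lborel (\<lambda>\<xi>. W x \<xi> *\<^sub>R \<xi> - D *\<^sub>R grad_x W x \<xi>) \<and> current D W x = 0"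
proof -
  define m where "m = (b / c) *\<^sub>R x"
  define \<theta> where "\<theta> = 1 + 2 * D * \<kappa> * b"
  define K where "K = \<theta> * C * exp (- \<kappa> * (a - b\<^sup>2 / c) * (x \<bullet> x))"
  let ?g = "\<lambda>\<eta>::real^'n. exp (- (\<kappa> * c) * (norm \<eta>)\<^sup>2) *\<^sub>R \<eta>"
  have "c \<noteq> 0" using pos by auto
  have square: "\<theta> * W x \<xi> = K * exp (- (\<kappa> * c) * (norm (\<xi> + m))\<^sup>2)" for \<xi>
  proof -
    have "- \<kappa> * (a * (x \<bullet> x) + 2 * b * (x \<bullet> \<xi>) + c * (\<xi> \<bullet> \<xi>))
        = - \<kappa> * (a - b\<^sup>2 / c) * (x \<bullet> x) + - (\<kappa> * c) * (norm (\<xi> + m))\<^sup>2"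
      using \<open>c \<noteq> 0\<close> unfolding power2_norm_eq_inner m_def
      by (simp add: inner_add_left inner_add_right inner_commute field_simps power2_eq_square)
    then show ?thesis unfolding K_def W_def by (simp flip: exp_add)
  qed
  have balance': "\<theta> * (b / c) = 2 * D * \<kappa> * a"
    using balance \<open>c \<noteq> 0\<close> unfolding \<theta>_def by (simp add: field_simps)
  have grad: "grad_x W x \<xi> = (- 2 * \<kappa> * W x \<xi>) *\<^sub>R (a *\<^sub>R x + b *\<^sub>R \<xi>)" for \<xi>
    unfolding W_def by (rule grad_x_gaussian)
  have integrand: "W x \<xi> *\<^sub>R \<xi> - D *\<^sub>R grad_x W x \<xi> = K *\<^sub>R ?g (m + 1 *\<^sub>R \<xi>)" for \<xi>
  proof -
    have "W x \<xi> *\<^sub>R \<xi> - D *\<^sub>R grad_x W x \<xi> = W x \<xi> *\<^sub>R (\<theta> *\<^sub>R \<xi> + (2 * D * \<kappa> * a) *\<^sub>R x)"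
      unfolding grad \<theta>_def by (simp add: algebra_simps)
    also have "\<dots> = (\<theta> * W x \<xi>) *\<^sub>R (\<xi> + m)"
      unfolding m_def balance'[symmetric] by (simp add: algebra_simps)
    finally show ?thesis by (simp add: square add.commute)
  qed
  have [measurable]: "?g \<in> borel_measurable borel" by measurable
  have "integrable lborel (\<lambda>\<xi>. ?g (m + 1 *\<^sub>R \<xi>))" and zero: "(\<integral>\<xi>. ?g (m + 1 *\<^sub>R \<xi>) \<partial>lborel) = 0"
    using gaussian_first_moment[OF pos, where 'a="real^'n"]
      lborel_integral_isometric_affine[of 1 ?g m] by simp_all
  then show ?thesis
    unfolding current_def integrand using integrable_scaleR_right[of K]
    by (simp only: integral_scaleR_right zero scaleR_zero_right simp_thms)
qed

lemma w_inf_gaussian: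
  fixes \<omega>0 \<gamma> Dpp Dqq Dpq :: real
  defines "Q11 \<equiv> Dpp + \<omega>0\<^sup>2 * Dqq" and "Q12 \<equiv> 2 * \<omega>0 * \<gamma> * Dqq"
    and "Q22 \<equiv> Dpp + \<omega>0\<^sup>2 * Dqq + 4 * \<gamma> * (Dpq + \<gamma> * Dqq)"
  defines "Q \<equiv> Q11 * Q22 - Q12\<^sup>2"
  shows "w_inf \<omega>0 \<gamma> Dpp Dqq Dpq = (\<lambda>(x::real^'n::finite) \<xi>.
           \<gamma> * \<omega>0 / ((2 * pi) ^ CARD('n) * sqrt Q) *
           exp (- (\<gamma> / Q) * ((Q11 * \<omega>0\<^sup>2) * (x \<bullet> x) + 2 * (Q12 * \<omega>0) * (x \<bullet> \<xi>) + Q22 * (\<xi> \<bullet> \<xi>))))"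
  unfolding w_inf_def Let_def assms by (simp add: fun_eq_iff power2_norm_eq_inner mult.assoc)

lemma current_w_inf_eq_zero:
  fixes x :: "real^'n::finite"
  assumes "\<gamma> > 0" "\<omega>0 > 0" "Dpp > 0" "Dqq \<ge> 0" "Dpq \<ge> 0"
  shows "integrable lborel (\<lambda>\<xi>. w_inf \<omega>0 \<gamma> Dpp Dqq Dpq x \<xi> *\<^sub>R \<xi>
                                 - Dqq *\<^sub>R grad_x (w_inf \<omega>0 \<gamma> Dpp Dqq Dpq) x \<xi>)
         \<and> current Dqq (w_inf \<omega>0 \<gamma> Dpp Dqq Dpq) x = 0"
proof -
  define Q11 where "Q11 = Dpp + \<omega>0\<^sup>2 * Dqq"
  define Q12 where "Q12 = 2 * \<omega>0 * \<gamma> * Dqq"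
  define Q22 where "Q22 = Dpp + \<omega>0\<^sup>2 * Dqq + 4 * \<gamma> * (Dpq + \<gamma> * Dqq)"
  define Q where "Q = Q11 * Q22 - Q12\<^sup>2"
  have "Q11 > 0"
    using assms by (simp add: Q11_def add_pos_nonneg)
  have "Q = Q11\<^sup>2 + 4 * \<gamma> * Q11 * Dpq + 4 * \<gamma>\<^sup>2 * Dpp * Dqq"
    unfolding Q_def Q11_def Q12_def Q22_def by (simp add: power2_eq_square algebra_simps)
  also have "\<dots> > 0"
    using \<open>Q11 > 0\<close> assms by (intro add_pos_nonneg) (auto intro!: mult_nonneg_nonneg)
  finally have "Q > 0" .
  moreover have "Q22 > 0"
    using assms by (simp add: Q22_def add_pos_nonneg)
  ultimately have "\<gamma> / Q * Q22 > 0" using assms by simp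
  moreover have "(Q + 2 * Dqq * \<gamma> * (Q12 * \<omega>0)) * (Q12 * \<omega>0) = 2 * Dqq * \<gamma> * (Q11 * \<omega>0\<^sup>2) * Q22"
    unfolding Q_def Q11_def Q12_def Q22_def by (simp add: power2_eq_square algebra_simps)
  then have "(1 + 2 * Dqq * (\<gamma> / Q) * (Q12 * \<omega>0)) * (Q12 * \<omega>0) = 2 * Dqq * (\<gamma> / Q) * (Q11 * \<omega>0\<^sup>2) * Q22"
    using \<open>Q > 0\<close> by (simp add: field_simps)
  ultimately show ?thesis
    unfolding w_inf_gaussian Q_def Q11_def Q12_def Q22_def by (rule current_gaussian_eq_zero)
qed

section \<open>Smooth functions generated by a derivative-closed family\<close>

definition derivative_closed :: "(real \<Rightarrow> real) set \<Rightarrow> bool" where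
  "derivative_closed A \<longleftrightarrow> (\<forall>a\<in>A. \<exists>a'\<in>A. \<forall>t. (a has_real_derivative a' t) (at t))"

inductive_set smooth_closure :: "(real \<Rightarrow> real) set \<Rightarrow> ('a::euclidean_space \<Rightarrow> real) set"
  for A where
  const: "(\<lambda>p. c) \<in> smooth_closure A"
| linear: "bounded_linear f \<Longrightarrow> f \<in> smooth_closure A"
  (* quadratic forms; l1, l2 are endomorphisms because a rule cannot introduce a further type *)
| inner: "bounded_linear (l1 :: 'a \<Rightarrow> 'a) \<Longrightarrow> bounded_linear (l2 :: 'a \<Rightarrow> 'a) \<Longrightarrow>
    (\<lambda>p. l1 p \<bullet> l2 p) \<in> smooth_closure A"
| add: "f \<in> smooth_closure A \<Longrightarrow> g \<in> smooth_closure A \<Longrightarrow> (\<lambda>p. f p + g p) \<in> smooth_closure A"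
| mult: "f \<in> smooth_closure A \<Longrightarrow> g \<in> smooth_closure A \<Longrightarrow> (\<lambda>p. f p * g p) \<in> smooth_closure A"
| compose: "a \<in> A \<Longrightarrow> f \<in> smooth_closure A \<Longrightarrow> (\<lambda>p. a (f p)) \<in> smooth_closure A"
| inverse: "f \<in> smooth_closure A \<Longrightarrow> (\<And>p. f p \<noteq> 0) \<Longrightarrow> (\<lambda>p. inverse (f p)) \<in> smooth_closure A"

lemma smooth_closure_has_derivative:
  assumes A: "derivative_closed A" and "f \<in> smooth_closure A"
  shows "\<exists>D. (\<forall>p. (f has_derivative D p) (at p)) \<and> (\<forall>v. (\<lambda>p. D p v) \<in> smooth_closure A)"
  using \<open>f \<in> smooth_closure A\<close>
proof induction
  case (const c)
  show ?case by (auto intro!: exI[of _ "\<lambda>p v. 0"] smooth_closure.const)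
next
  case (linear f)
  then show ?case
    by (auto intro!: exI[of _ "\<lambda>p. f"] smooth_closure.const bounded_linear_imp_has_derivative)
next
  case (inner l1 l2)
  have "bounded_linear (\<lambda>p. l1 p \<bullet> l2 v)" "bounded_linear (\<lambda>p. l1 v \<bullet> l2 p)" for v
    using inner by (auto intro: bounded_linear_compose[OF bounded_linear_inner_left]
        bounded_linear_compose[OF bounded_linear_inner_right])
  then show ?case using inner
    by (intro exI[of _ "\<lambda>p v. l1 p \<bullet> l2 v + l1 v \<bullet> l2 p"] conjI allI smooth_closure.add
        smooth_closure.linear has_derivative_inner[OF bounded_linear_imp_has_derivative
          bounded_linear_imp_has_derivative, THEN has_derivative_eq_rhs]) auto
next
  case (add f g)
  then obtain Df Dg where "\<forall>p. (f has_derivative Df p) (at p)" "\<forall>v. (\<lambda>p. Df p v) \<in> smooth_closure A"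
    and "\<forall>p. (g has_derivative Dg p) (at p)" "\<forall>v. (\<lambda>p. Dg p v) \<in> smooth_closure A" by blast
  then show ?case
    by (intro exI[of _ "\<lambda>p v. Df p v + Dg p v"]) (auto intro: has_derivative_add smooth_closure.add)
next
  case (mult f g)
  then obtain Df Dg where "\<forall>p. (f has_derivative Df p) (at p)" "\<forall>v. (\<lambda>p. Df p v) \<in> smooth_closure A"
    and "\<forall>p. (g has_derivative Dg p) (at p)" "\<forall>v. (\<lambda>p. Dg p v) \<in> smooth_closure A" by blast
  with mult.hyps show ?case
    by (intro exI[of _ "\<lambda>p v. f p * Dg p v + Df p v * g p"])
      (auto intro!: has_derivative_mult smooth_closure.add smooth_closure.mult)
next
  case (compose a f)
  then obtain Df where "\<forall>p. (f has_derivative Df p) (at p)" "\<forall>v. (\<lambda>p. Df p v) \<in> smooth_closure A"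
    by blast
  moreover obtain a' where "a' \<in> A" "\<And>t. (a has_real_derivative a' t) (at t)"
    using A compose.hyps(1) unfolding derivative_closed_def by blast
  ultimately show ?case using compose.hyps
    by (intro exI[of _ "\<lambda>p v. Df p v * a' (f p)"])
      (auto intro: DERIV_compose_FDERIV smooth_closure.mult smooth_closure.compose)
next
  case (inverse f)
  then obtain Df where Df: "\<forall>p. (f has_derivative Df p) (at p)" "\<forall>v. (\<lambda>p. Df p v) \<in> smooth_closure A"
    by blast
  have "(\<lambda>p. (- 1) * (inverse (f p) * Df p v * inverse (f p))) \<in> smooth_closure A" for v
    using inverse.hyps Df(2)
    by (intro smooth_closure.mult smooth_closure.const smooth_closure.inverse) auto
  then show ?case using inverse.hyps Df(1)
    by (intro exI[of _ "\<lambda>p v. - (inverse (f p) * Df p v * inverse (f p))"])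
      (auto intro: has_derivative_inverse)
qed

lemma smooth_closure_dd:
  assumes "derivative_closed A" and "f \<in> smooth_closure A"
  shows "dd vs f \<in> smooth_closure A"
proof (induction vs)
  case Nil
  then show ?case using assms(2) by simp
next
  case (Cons v vs)
  then obtain D where D: "\<forall>p. (dd vs f has_derivative D p) (at p)" "\<forall>v. (\<lambda>p. D p v) \<in> smooth_closure A"
    using smooth_closure_has_derivative[OF assms(1)] by blast
  then have "frechet_derivative (dd vs f) (at p) = D p" for p
    by (metis frechet_derivative_at)
  then have "dd (v # vs) f = (\<lambda>p. D p v)" by simp
  with D(2) show ?case by simp
qed

lemma smooth_closure_Cinf:
  assumes "derivative_closed A" and "f \<in> smooth_closure A"
  shows "Cinf f"
  unfolding Cinf_def differentiable_on_def differentiable_def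
  using smooth_closure_has_derivative[OF assms(1) smooth_closure_dd[OF assms]] by blast

lemma smooth_closure_deriv:
  fixes f :: "real \<Rightarrow> real"
  assumes "derivative_closed A" and "f \<in> smooth_closure A"
  shows "(f has_real_derivative deriv f t) (at t)" and "deriv f \<in> smooth_closure A"
proof -
  obtain D where D: "\<forall>t. (f has_derivative D t) (at t)" "\<forall>v. (\<lambda>t. D t v) \<in> smooth_closure A"
    using smooth_closure_has_derivative[OF assms] by blast
  have "(f has_real_derivative D t 1) (at t)" for t
  proof -
    have "linear (D t)" using D(1) has_derivative_linear by blast
    then have "D t = (\<lambda>h. D t 1 * h)"
      by (metis linear_cmul mult.commute real_scaleR_def mult.right_neutral)
    then show ?thesis using D(1) unfolding has_field_derivative_def by metis
  qed
  then have "deriv f = (\<lambda>t. D t 1)" using DERIV_imp_deriv by blast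
  then show "(f has_real_derivative deriv f t) (at t)" "deriv f \<in> smooth_closure A"
    using \<open>(f has_real_derivative D t 1) (at t)\<close> D(2) by simp_all
qed

lemma derivative_closed_smooth_closure:
  assumes "derivative_closed A"
  shows "derivative_closed (smooth_closure A :: (real \<Rightarrow> real) set)"
  unfolding derivative_closed_def[of "smooth_closure A"] using smooth_closure_deriv[OF assms] by blast

section \<open>A smooth cutoff\<close>

definition flat_poly :: "real poly \<Rightarrow> real \<Rightarrow> real" where
  "flat_poly q t = (if t > 0 then poly q (1 / t) * exp (- (1 / t)) else 0)"

lemma poly_times_exp_minus_tendsto_zero:
  "((\<lambda>s. poly q s * s * exp (- s)) \<longlongrightarrow> (0::real)) at_top"
proof -
  have "((\<lambda>s. \<Sum>i\<le>degree q. coeff q i * (s ^ Suc i / exp s)) \<longlongrightarrow> (\<Sum>i\<le>degree q. coeff q i * 0)) at_top"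
    by (intro tendsto_sum tendsto_mult tendsto_const tendsto_power_div_exp_0)
  then show ?thesis
    by (simp add: poly_altdef sum_distrib_left sum_divide_distrib exp_minus field_simps)
qed

lemma flat_poly_has_real_derivative:
  "(flat_poly q has_real_derivative flat_poly ([:0, 0, 1:] * (q - pderiv q)) t) (at t)"
proof -
  consider "t > 0" | "t < 0" | "t = 0" by linarith
  then show ?thesis
  proof cases
    case 1
    have inverse: "((\<lambda>t. 1 / t) has_real_derivative - (1 / t)\<^sup>2) (at t)"
      using 1 by (auto intro!: derivative_eq_intros simp: power2_eq_square)
    have derivative: "((\<lambda>t. poly q (1 / t) * exp (- (1 / t))) has_real_derivative
        poly (pderiv q) (1 / t) * - (1 / t)\<^sup>2 * exp (- (1 / t))
        + exp (- (1 / t)) * - (- (1 / t)\<^sup>2) * poly q (1 / t)) (at t)"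
      by (intro DERIV_mult DERIV_chain2[OF poly_DERIV inverse] DERIV_chain2[OF DERIV_exp DERIV_minus[OF inverse]])
    have simplified: "poly (pderiv q) (1 / t) * - (1 / t)\<^sup>2 * exp (- (1 / t))
        + exp (- (1 / t)) * - (- (1 / t)\<^sup>2) * poly q (1 / t) = flat_poly ([:0, 0, 1:] * (q - pderiv q)) t"
      using 1 by (simp add: flat_poly_def poly_diff algebra_simps power2_eq_square)
    show ?thesis
      using derivative unfolding simplified
      by (rule has_field_derivative_transform_within_open[of _ _ _ "{0<..}"])
        (use 1 in \<open>auto simp: flat_poly_def\<close>)
  next
    case 2
    have "((\<lambda>t. 0) has_real_derivative 0) (at t)" by simp
    then have "(flat_poly q has_real_derivative 0) (at t)"
      by (rule has_field_derivative_transform_within_open[of _ _ _ "{..<0}"])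
        (use 2 in \<open>auto simp: flat_poly_def\<close>)
    then show ?thesis using 2 by (simp add: flat_poly_def)
  next
    case 3
    have "((\<lambda>y. flat_poly q y / y) \<longlongrightarrow> 0) (at_right 0)"
    proof (rule Lim_transform_eventually)
      show "((\<lambda>y. poly q (inverse y) * inverse y * exp (- inverse y)) \<longlongrightarrow> 0) (at_right 0)"
        by (rule filterlim_compose[OF poly_times_exp_minus_tendsto_zero filterlim_inverse_at_top_right])
      show "\<forall>\<^sub>F y in at_right 0. poly q (inverse y) * inverse y * exp (- inverse y) = flat_poly q y / y"
        using eventually_at_right_less[of "0::real"]
        by eventually_elim (simp add: flat_poly_def field_simps)
    qed
    moreover have "((\<lambda>y. flat_poly q y / y) \<longlongrightarrow> 0) (at_left 0)"
      by (rule Lim_transform_eventually[OF tendsto_const])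
        (simp add: eventually_at_filter flat_poly_def)
    ultimately have "((\<lambda>y. (flat_poly q y - flat_poly q 0) / (y - 0)) \<longlongrightarrow> 0) (at 0)"
      by (simp add: flat_poly_def filterlim_split_at)
    then show ?thesis using 3 by (simp add: has_field_derivative_iff flat_poly_def)
  qed
qed

lemma derivative_closed_flat_poly: "derivative_closed (range flat_poly)"
  unfolding derivative_closed_def using flat_poly_has_real_derivative by blast

definition cutoff :: "real \<Rightarrow> real" where
  "cutoff t = flat_poly 1 (2 - t) / (flat_poly 1 (2 - t) + flat_poly 1 (t - 1))"

lemma flat_poly_1: "flat_poly 1 t = (if t > 0 then exp (- (1 / t)) else 0)"
  by (simp add: flat_poly_def)

lemma cutoff_denominator_pos: "flat_poly 1 (2 - t) + flat_poly 1 (t - 1) > 0"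
  by (cases "t < 2") (auto simp: flat_poly_1 add_pos_nonneg add_nonneg_pos)

lemma cutoff_eq_1: "t \<le> 1 \<Longrightarrow> cutoff t = 1"
  using cutoff_denominator_pos[of t] by (simp add: cutoff_def flat_poly_1)

lemma cutoff_eq_0: "t \<ge> 2 \<Longrightarrow> cutoff t = 0"
  by (simp add: cutoff_def flat_poly_1)

lemma cutoff_smooth: "cutoff \<in> smooth_closure (range flat_poly)"
proof -
  have affine: "(\<lambda>t::real. c + s * t) \<in> smooth_closure (range flat_poly)" for c s
    by (rule smooth_closure.add[OF smooth_closure.const smooth_closure.linear[OF bounded_linear_mult_right]])
  have "(\<lambda>t. flat_poly 1 (2 + (-1) * t)) \<in> smooth_closure (range flat_poly)"
    and "(\<lambda>t. flat_poly 1 ((-1) + 1 * t)) \<in> smooth_closure (range flat_poly)"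
    by (rule smooth_closure.compose[OF rangeI affine])+
  then have "(\<lambda>t. flat_poly 1 (2 + (-1) * t) *
      inverse (flat_poly 1 (2 + (-1) * t) + flat_poly 1 ((-1) + 1 * t))) \<in> smooth_closure (range flat_poly)"
    using cutoff_denominator_pos
    by (intro smooth_closure.mult[of "\<lambda>t. flat_poly 1 (2 + (-1) * t)"] smooth_closure.inverse
        smooth_closure.add) (auto simp: less_le)
  then show ?thesis
    by (simp add: cutoff_def[abs_def] divide_inverse)
qed

definition cutoff' :: "real \<Rightarrow> real" where "cutoff' = deriv cutoff"

definition cutoff'' :: "real \<Rightarrow> real" where "cutoff'' = deriv cutoff'"

lemma
  shows cutoff_has_real_derivative: "(cutoff has_real_derivative cutoff' t) (at t)"
    and cutoff'_has_real_derivative: "(cutoff' has_real_derivative cutoff'' t) (at t)"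
    and isCont_cutoff'': "isCont cutoff'' t"
proof -
  note derivs = smooth_closure_deriv[OF derivative_closed_flat_poly]
  show "(cutoff has_real_derivative cutoff' t) (at t)"
    unfolding cutoff'_def by (rule derivs(1)[OF cutoff_smooth])
  show "(cutoff' has_real_derivative cutoff'' t) (at t)"
    unfolding cutoff''_def cutoff'_def by (rule derivs(1)[OF derivs(2)[OF cutoff_smooth]])
  show "isCont cutoff'' t"
    unfolding cutoff''_def cutoff'_def by (rule DERIV_isCont[OF derivs(1)[OF derivs(2)[OF derivs(2)[OF cutoff_smooth]]]])
qed

lemma cutoff'_cutoff''_eq_0:
  assumes "t < 1 \<or> 2 < t"
  shows "cutoff' t = 0" and "cutoff'' t = 0"
proof -
  define S :: "real set" where "S = (if t < 1 then {..<1} else {2<..})"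
  have S: "open S" "t \<in> S" using assms by (auto simp: S_def)
  have "cutoff' s = 0" if "s \<in> S" for s
  proof -
    have "\<forall>\<^sub>F r in nhds s. cutoff r = (if t < 1 then 1 else 0)"
      using eventually_nhds_in_open[OF \<open>open S\<close> that]
      by eventually_elim (auto simp: S_def cutoff_eq_1 cutoff_eq_0 split: if_splits)
    then have "deriv cutoff s = deriv (\<lambda>_. if t < 1 then 1 else 0) s"
      by (rule deriv_cong_ev) simp
    then show ?thesis by (simp add: cutoff'_def)
  qed
  then show "cutoff' t = 0" using S by blast
  have "\<forall>\<^sub>F r in nhds t. cutoff' r = 0"
    using eventually_nhds_in_open[OF S] by eventually_elim fact
  then have "deriv cutoff' t = deriv (\<lambda>_. 0) t"
    by (rule deriv_cong_ev) simp
  then show "cutoff'' t = 0" by (simp add: cutoff''_def)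
qed

lemma moments_bounded_if_vanishing:
  fixes f :: "real \<Rightarrow> real"
  assumes "continuous_on {0..2} f" and "\<And>t. 2 < t \<Longrightarrow> f t = 0"
  shows "\<exists>M. \<forall>t\<ge>0. \<forall>j\<le>2. \<bar>t ^ j * f t\<bar> \<le> M"
proof -
  obtain B where B: "\<And>t. t \<in> {0..2} \<Longrightarrow> \<bar>f t\<bar> \<le> B"
    using compact_imp_bounded[OF compact_continuous_image[OF assms(1)]]
    unfolding bounded_iff by fastforce
  have "\<bar>t ^ j * f t\<bar> \<le> 4 * B" if "t \<ge> 0" "j \<le> 2" for t j
  proof (cases "t \<le> 2")
    case True
    have "\<bar>t ^ j\<bar> \<le> 2 ^ j" using True that by (simp add: power_mono)
    also have "(2::real) ^ j \<le> 4" using power_increasing[OF \<open>j \<le> 2\<close>, of "2::real"] by simp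
    finally show ?thesis
      using B[of t] True that by (simp add: abs_mult mult_mono)
  next
    case False
    then show ?thesis using B[of 0] assms(2)[of t] by simp
  qed
  then show ?thesis by blast
qed

definition cutoff_moment_bound :: "real \<Rightarrow> bool" where
  "cutoff_moment_bound M \<longleftrightarrow>
     (\<forall>t\<ge>0. \<forall>j\<le>2. \<bar>t ^ j * cutoff t\<bar> \<le> M \<and> \<bar>t ^ j * cutoff' t\<bar> \<le> M \<and> \<bar>t ^ j * cutoff'' t\<bar> \<le> M)"

lemma cutoff_moment_bound_exists: "\<exists>M. cutoff_moment_bound M"
proof -
  have "continuous_on {0..2} cutoff" "continuous_on {0..2} cutoff'" "continuous_on {0..2} cutoff''"
    using DERIV_isCont[OF cutoff_has_real_derivative] DERIV_isCont[OF cutoff'_has_real_derivative]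
      isCont_cutoff'' by (auto intro!: continuous_at_imp_continuous_on)
  then obtain M0 M1 M2 where
    "\<forall>t\<ge>0. \<forall>j\<le>2. \<bar>t ^ j * cutoff t\<bar> \<le> M0" "\<forall>t\<ge>0. \<forall>j\<le>2. \<bar>t ^ j * cutoff' t\<bar> \<le> M1"
    "\<forall>t\<ge>0. \<forall>j\<le>2. \<bar>t ^ j * cutoff'' t\<bar> \<le> M2"
    using moments_bounded_if_vanishing cutoff_eq_0 cutoff'_cutoff''_eq_0 by (metis less_imp_le)
  then show ?thesis
    unfolding cutoff_moment_bound_def
    by (intro exI[of _ "max M0 (max M1 M2)"]) (auto simp: le_max_iff_disj)
qed

section \<open>The adjoint operator on functions of the energy\<close>

lemma dd_comp_mult:
  fixes \<Phi> \<Psi> :: "'a::euclidean_space \<Rightarrow> real" and g h :: "'a \<Rightarrow> 'a"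
  assumes \<Phi>: "\<And>p. (\<Phi> has_derivative (\<lambda>v. g p \<bullet> v)) (at p)" "bounded_linear g"
    and \<Psi>: "\<And>p. (\<Psi> has_derivative (\<lambda>v. h p \<bullet> v)) (at p)" "bounded_linear h"
    and G: "\<And>t. (G has_real_derivative G' t) (at t)" "\<And>t. (G' has_real_derivative G'' t) (at t)"
    and K: "\<And>t. (K has_real_derivative K' t) (at t)" "\<And>t. (K' has_real_derivative K'' t) (at t)"
  shows "dd [v] (\<lambda>p. G (\<Phi> p) * K (\<Psi> p)) p
           = G' (\<Phi> p) * K (\<Psi> p) * (g p \<bullet> v) + G (\<Phi> p) * K' (\<Psi> p) * (h p \<bullet> v)"
    and "dd [u, v] (\<lambda>p. G (\<Phi> p) * K (\<Psi> p)) p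
           = G'' (\<Phi> p) * K (\<Psi> p) * (g p \<bullet> u) * (g p \<bullet> v) + G' (\<Phi> p) * K (\<Psi> p) * (g u \<bullet> v)
           + G' (\<Phi> p) * K' (\<Psi> p) * ((g p \<bullet> u) * (h p \<bullet> v) + (g p \<bullet> v) * (h p \<bullet> u))
           + G (\<Phi> p) * K'' (\<Psi> p) * (h p \<bullet> u) * (h p \<bullet> v) + G (\<Phi> p) * K' (\<Psi> p) * (h u \<bullet> v)"
proof -
  let ?D = "\<lambda>p v. G' (\<Phi> p) * K (\<Psi> p) * (g p \<bullet> v) + G (\<Phi> p) * K' (\<Psi> p) * (h p \<bullet> v)"
  have first: "((\<lambda>p. G (\<Phi> p) * K (\<Psi> p)) has_derivative ?D p) (at p)" for p
    by (rule has_derivative_eq_rhs, rule has_derivative_mult[OF DERIV_compose_FDERIV[OF G(1) \<Phi>(1)]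
        DERIV_compose_FDERIV[OF K(1) \<Psi>(1)]]) (simp add: fun_eq_iff algebra_simps)
  then have dd1: "dd [v] (\<lambda>p. G (\<Phi> p) * K (\<Psi> p)) = (\<lambda>p. ?D p v)" for v
    by (simp add: fun_eq_iff frechet_derivative_at[OF first, symmetric])
  then show "dd [v] (\<lambda>p. G (\<Phi> p) * K (\<Psi> p)) p = ?D p v" by simp
  have lin: "((\<lambda>p. g p \<bullet> v) has_derivative (\<lambda>u. g u \<bullet> v)) (at p)"
    "((\<lambda>p. h p \<bullet> v) has_derivative (\<lambda>u. h u \<bullet> v)) (at p)"
    using \<Phi>(2) \<Psi>(2) by (auto intro!: bounded_linear_imp_has_derivative
        bounded_linear_compose[OF bounded_linear_inner_left])
  have second: "((\<lambda>p. ?D p v) has_derivative (\<lambda>u.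
           G'' (\<Phi> p) * K (\<Psi> p) * (g p \<bullet> u) * (g p \<bullet> v) + G' (\<Phi> p) * K (\<Psi> p) * (g u \<bullet> v)
           + G' (\<Phi> p) * K' (\<Psi> p) * ((g p \<bullet> u) * (h p \<bullet> v) + (g p \<bullet> v) * (h p \<bullet> u))
           + G (\<Phi> p) * K'' (\<Psi> p) * (h p \<bullet> u) * (h p \<bullet> v) + G (\<Phi> p) * K' (\<Psi> p) * (h u \<bullet> v))) (at p)"
    by (rule has_derivative_eq_rhs, (rule has_derivative_add has_derivative_mult
        DERIV_compose_FDERIV[OF G(1) \<Phi>(1)] DERIV_compose_FDERIV[OF G(2) \<Phi>(1)]
        DERIV_compose_FDERIV[OF K(1) \<Psi>(1)] DERIV_compose_FDERIV[OF K(2) \<Psi>(1)] lin)+)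
      (simp add: fun_eq_iff algebra_simps)
  moreover have "dd [u, v] (\<lambda>p. G (\<Phi> p) * K (\<Psi> p)) p = frechet_derivative (\<lambda>q. ?D q v) (at p) u"
    by (simp add: frechet_derivative_at[OF first, symmetric])
  ultimately show "dd [u, v] (\<lambda>p. G (\<Phi> p) * K (\<Psi> p)) p =
             G'' (\<Phi> p) * K (\<Psi> p) * (g p \<bullet> u) * (g p \<bullet> v) + G' (\<Phi> p) * K (\<Psi> p) * (g u \<bullet> v)
             + G' (\<Phi> p) * K' (\<Psi> p) * ((g p \<bullet> u) * (h p \<bullet> v) + (g p \<bullet> v) * (h p \<bullet> u))
             + G (\<Phi> p) * K'' (\<Psi> p) * (h p \<bullet> u) * (h p \<bullet> v) + G (\<Phi> p) * K' (\<Psi> p) * (h u \<bullet> v)"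
    by (simp add: frechet_derivative_at[symmetric])
qed

type_synonym 'n phase_space = "(real^'n) \<times> (real^'n)"

definition energy :: "real \<Rightarrow> real \<Rightarrow> 'n::finite phase_space \<Rightarrow> real" where
  "energy \<omega> \<gamma> p = \<omega>\<^sup>2 * (fst p \<bullet> fst p)
     + ((2 * \<gamma>) *\<^sub>R fst p + snd p) \<bullet> ((2 * \<gamma>) *\<^sub>R fst p + snd p)"

definition energy_grad :: "real \<Rightarrow> real \<Rightarrow> 'n::finite phase_space \<Rightarrow> 'n phase_space" where
  "energy_grad \<omega> \<gamma> p =
     ((2 * \<omega>\<^sup>2) *\<^sub>R fst p + (4 * \<gamma>) *\<^sub>R ((2 * \<gamma>) *\<^sub>R fst p + snd p), 2 *\<^sub>R ((2 * \<gamma>) *\<^sub>R fst p + snd p))"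

text \<open>The bilinear form of the second-order part of \<open>QFP_adj\<close> (its carre du champ), applied to two gradients.\<close>

definition diffusion_form ::
  "real \<Rightarrow> real \<Rightarrow> real \<Rightarrow> 'n::finite phase_space \<Rightarrow> 'n phase_space \<Rightarrow> real" where
  "diffusion_form Dpp Dqq Dpq g h =
     Dpp * (snd g \<bullet> snd h) + Dqq * (fst g \<bullet> fst h) + Dpq * (fst g \<bullet> snd h + snd g \<bullet> fst h)"

lemma energy_nonneg: "energy \<omega> \<gamma> p \<ge> 0"
  by (simp add: energy_def)

lemma bounded_linear_energy_grad: "bounded_linear (energy_grad \<omega> \<gamma>)"
  unfolding energy_grad_def
  by (intro bounded_linear_Pair bounded_linear_add bounded_linear_fst bounded_linear_snd
      bounded_linear_compose[OF bounded_linear_scaleR_right])+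

lemma energy_has_derivative: "(energy \<omega> \<gamma> has_derivative (\<lambda>v. energy_grad \<omega> \<gamma> p \<bullet> v)) (at p)"
  unfolding energy_def[abs_def]
  by (rule has_derivative_eq_rhs, (rule derivative_intros)+)
    (simp add: fun_eq_iff energy_grad_def inner_prod_def inner_add_left inner_add_right
      inner_commute algebra_simps)

lemma norm_square_has_derivative:
  "((\<lambda>p. (norm p)\<^sup>2) has_derivative (\<lambda>v. (2 *\<^sub>R p) \<bullet> v)) (at p)"
  using has_derivative_sqnorm_at[of p] by simp

lemma inner_ex: "g \<bullet> ex j = fst g $ j" and inner_exi: "g \<bullet> exi j = snd g $ j"
  by (simp_all add: ex_def exi_def inner_prod_def inner_axis)

lemma energy_grad_inner_basis:
  "energy_grad \<omega> \<gamma> p \<bullet> ex j = 2 * \<omega>\<^sup>2 * fst p $ j + 4 * \<gamma> * (2 * \<gamma> * fst p $ j + snd p $ j)"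
  "energy_grad \<omega> \<gamma> p \<bullet> exi j = 2 * (2 * \<gamma> * fst p $ j + snd p $ j)"
  "energy_grad \<omega> \<gamma> (ex j) \<bullet> ex j = 2 * \<omega>\<^sup>2 + 8 * \<gamma>\<^sup>2"
  "energy_grad \<omega> \<gamma> (exi j) \<bullet> exi j = 2"
  "energy_grad \<omega> \<gamma> (ex j) \<bullet> exi j = 4 * \<gamma>"
  by (simp_all add: inner_ex inner_exi inner_axis energy_grad_def ex_def exi_def power2_eq_square
      algebra_simps)

definition adj_energy :: "real \<Rightarrow> real \<Rightarrow> real \<Rightarrow> real \<Rightarrow> real \<Rightarrow> 'n::finite phase_space \<Rightarrow> real" where
  "adj_energy \<omega> \<gamma> Dpp Dqq Dpq p = 4 * \<omega>\<^sup>2 * \<gamma> * (fst p \<bullet> fst p)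
     - real CARD('n) * (2 * Dpp + Dqq * (2 * \<omega>\<^sup>2 + 8 * \<gamma>\<^sup>2) + 8 * \<gamma> * Dpq)"

definition adj_norm_square :: "real \<Rightarrow> real \<Rightarrow> real \<Rightarrow> real \<Rightarrow> 'n::finite phase_space \<Rightarrow> real" where
  "adj_norm_square \<omega> \<gamma> Dpp Dqq p = (2 * \<omega>\<^sup>2 - 2) * (fst p \<bullet> snd p) + 4 * \<gamma> * (snd p \<bullet> snd p)
     - 2 * real CARD('n) * (Dpp + Dqq)"

lemma adj_energy_degenerate:
  "\<gamma> * \<omega> = 0 \<Longrightarrow> adj_energy \<omega> \<gamma> Dpp Dqq Dpq (p :: 'n::finite phase_space)
     = - real CARD('n) * (2 * Dpp + Dqq * (2 * \<omega>\<^sup>2 + 8 * \<gamma>\<^sup>2) + 8 * \<gamma> * Dpq)"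
  by (auto simp: adj_energy_def)

lemma QFP_adj_comp_energy_norm:
  fixes p :: "'n::finite phase_space" and \<omega> \<gamma> Dpp Dqq Dpq :: real
  assumes G: "\<And>t. (G has_real_derivative G' t) (at t)" "\<And>t. (G' has_real_derivative G'' t) (at t)"
    and K: "\<And>t. (K has_real_derivative K' t) (at t)" "\<And>t. (K' has_real_derivative K'' t) (at t)"
  defines "\<Phi> \<equiv> energy \<omega> \<gamma> p" and "\<Psi> \<equiv> (norm p)\<^sup>2"
  shows "QFP_adj \<omega> \<gamma> Dpp Dqq Dpq (\<lambda>p. G (energy \<omega> \<gamma> p) * K ((norm p)\<^sup>2)) p =
      G' \<Phi> * K \<Psi> * adj_energy \<omega> \<gamma> Dpp Dqq Dpq p
    + G \<Phi> * K' \<Psi> * adj_norm_square \<omega> \<gamma> Dpp Dqq p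
    - G'' \<Phi> * K \<Psi> * diffusion_form Dpp Dqq Dpq (energy_grad \<omega> \<gamma> p) (energy_grad \<omega> \<gamma> p)
    - 2 * G' \<Phi> * K' \<Psi> * diffusion_form Dpp Dqq Dpq (energy_grad \<omega> \<gamma> p) (2 *\<^sub>R p)
    - G \<Phi> * K'' \<Psi> * diffusion_form Dpp Dqq Dpq (2 *\<^sub>R p) (2 *\<^sub>R p)"
    (is "?L = ?R")
proof -
  define E where "E j = (let x = fst p $ j; y = snd p $ j; b = 2 * \<gamma> * x + y; a = 2 * \<omega>\<^sup>2 * x + 4 * \<gamma> * b in
      G' \<Phi> * K \<Psi> * (4 * \<omega>\<^sup>2 * \<gamma> * x\<^sup>2 - (2 * Dpp + Dqq * (2 * \<omega>\<^sup>2 + 8 * \<gamma>\<^sup>2) + 8 * \<gamma> * Dpq))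
    + G \<Phi> * K' \<Psi> * ((2 * \<omega>\<^sup>2 - 2) * x * y + 4 * \<gamma> * y\<^sup>2 - 2 * (Dpp + Dqq))
    - G'' \<Phi> * K \<Psi> * (Dpp * (2 * b)\<^sup>2 + Dqq * a\<^sup>2 + 2 * Dpq * a * (2 * b))
    - 2 * G' \<Phi> * K' \<Psi> * (Dpp * (2 * b) * (2 * y) + Dqq * a * (2 * x) + Dpq * (a * (2 * y) + 2 * b * (2 * x)))
    - G \<Phi> * K'' \<Psi> * (Dpp * (2 * y)\<^sup>2 + Dqq * (2 * x)\<^sup>2 + 2 * Dpq * (2 * x) * (2 * y)))" for j
  note dd = dd_comp_mult[OF energy_has_derivative bounded_linear_energy_grad norm_square_has_derivative
      bounded_linear_scaleR_right G K, folded \<Phi>_def \<Psi>_def]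
  let ?f = "\<lambda>p. G (energy \<omega> \<gamma> p) * K ((norm p)\<^sup>2)"
  have "?L = (\<Sum>j\<in>UNIV. - (snd p $ j * dd [ex j] ?f p) + \<omega>\<^sup>2 * (fst p $ j * dd [exi j] ?f p)
      - Dpp * dd [exi j, exi j] ?f p + 2 * \<gamma> * (snd p $ j * dd [exi j] ?f p)
      - Dqq * dd [ex j, ex j] ?f p - 2 * Dpq * dd [ex j, exi j] ?f p)"
    by (simp add: QFP_adj_def Let_def sum.distrib sum_subtractf sum_negf sum_distrib_left)
  also have "\<dots> = (\<Sum>j\<in>UNIV. E j)"
    by (intro sum.cong refl, simp only: dd energy_grad_inner_basis, simp only: inner_ex inner_exi)
      (simp add: E_def Let_def \<Phi>_def \<Psi>_def ex_def exi_def power2_eq_square algebra_simps)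
  also have "\<dots> = ?R"
    unfolding E_def Let_def diffusion_form_def energy_grad_def adj_energy_def adj_norm_square_def
    by (simp add: inner_vec_def sum.distrib sum_subtractf sum_distrib_left power2_eq_square algebra_simps)
  finally show ?thesis .
qed

section \<open>Truncated energies as test functions\<close>

lemma energy_eq_inner_energy_grad: "energy \<omega> \<gamma> p = p \<bullet> ((1 / 2) *\<^sub>R energy_grad \<omega> \<gamma> p)"
  by (simp add: energy_def energy_grad_def inner_prod_def inner_add_left inner_add_right algebra_simps)

definition trunc :: "real \<Rightarrow> real \<Rightarrow> real" where
  "trunc R a = a * cutoff (a / R)"

definition trunc' :: "real \<Rightarrow> real \<Rightarrow> real" where
  "trunc' R a = cutoff (a / R) + a / R * cutoff' (a / R)"

definition trunc'' :: "real \<Rightarrow> real \<Rightarrow> real" where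
  "trunc'' R a = (2 * cutoff' (a / R) + a / R * cutoff'' (a / R)) / R"

lemma cutoff_scaled_has_real_derivative:
  "((\<lambda>a. cutoff (a / R)) has_real_derivative cutoff' (a / R) / R) (at a)"
  "((\<lambda>a. cutoff' (a / R)) has_real_derivative cutoff'' (a / R) / R) (at a)"
  using DERIV_chain2[OF cutoff_has_real_derivative DERIV_cdivide[OF DERIV_ident, of R]]
    DERIV_chain2[OF cutoff'_has_real_derivative DERIV_cdivide[OF DERIV_ident, of R]]
  by simp_all

lemma trunc_has_real_derivative:
  assumes "R \<noteq> 0"
  shows "(trunc R has_real_derivative trunc' R a) (at a)"
    and "(trunc' R has_real_derivative trunc'' R a) (at a)"
  unfolding trunc_def[abs_def] trunc'_def[abs_def] trunc''_def
  using assms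
  by (auto intro!: derivative_eq_intros cutoff_scaled_has_real_derivative simp: field_simps)

lemma cutoff_scaled_derivs_has_real_derivative:
  "((\<lambda>b. cutoff' (b / S) / S) has_real_derivative cutoff'' (b / S) / S\<^sup>2) (at b)"
  using DERIV_cdivide[OF cutoff_scaled_has_real_derivative(2), of S S b]
  by (simp add: power2_eq_square)

text \<open>The cutoff in \<open>|p|\<^sup>2\<close> is needed because the energy is not coercive when \<open>\<omega> = 0\<close>.\<close>

definition test_fn :: "real \<Rightarrow> real \<Rightarrow> real \<Rightarrow> real \<Rightarrow> 'n::finite phase_space \<Rightarrow> real" where
  "test_fn \<omega> \<gamma> R S p = trunc R (energy \<omega> \<gamma> p) * cutoff ((norm p)\<^sup>2 / S)"

lemma test_fun_test_fn:
  assumes "R > 0" "S > 0"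
  shows "test_fun (test_fn \<omega> \<gamma> R S :: 'n::finite phase_space \<Rightarrow> real)"
proof -
  let ?C = "smooth_closure (smooth_closure (range flat_poly)) :: ('n phase_space \<Rightarrow> real) set"
  have closed: "derivative_closed (smooth_closure (range flat_poly))"
    by (rule derivative_closed_smooth_closure[OF derivative_closed_flat_poly])
  have energy: "energy \<omega> \<gamma> \<in> ?C"
    unfolding energy_eq_inner_energy_grad[abs_def]
    by (intro smooth_closure.inner bounded_linear_ident bounded_linear_compose[OF
        bounded_linear_scaleR_right bounded_linear_energy_grad])
  have norm: "(\<lambda>p. (norm p)\<^sup>2) \<in> ?C"
    unfolding power2_norm_eq_inner by (intro smooth_closure.inner bounded_linear_ident)
  have "(\<lambda>p. (energy \<omega> \<gamma> p * cutoff (energy \<omega> \<gamma> p * inverse R)) * cutoff ((norm p)\<^sup>2 * inverse S)) \<in> ?C"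
    by (intro smooth_closure.mult smooth_closure.compose[OF cutoff_smooth]
        energy norm smooth_closure.const)
  then have "Cinf (test_fn \<omega> \<gamma> R S :: 'n phase_space \<Rightarrow> real)"
    using smooth_closure_Cinf[OF closed]
    by (simp add: test_fn_def[abs_def] trunc_def divide_inverse)
  moreover have "{p. test_fn \<omega> \<gamma> R S p \<noteq> 0} \<subseteq> cball (0 :: 'n phase_space) (sqrt (2 * S))"
  proof
    fix p :: "'n phase_space"
    assume "p \<in> {p. test_fn \<omega> \<gamma> R S p \<noteq> 0}"
    then have "cutoff ((norm p)\<^sup>2 / S) \<noteq> 0" by (auto simp: test_fn_def)
    then have "(norm p)\<^sup>2 / S < 2" using cutoff_eq_0 not_less by blast
    then have "norm p \<le> sqrt (2 * S)" using assms by (simp add: real_le_rsqrt field_simps)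
    then show "p \<in> cball 0 (sqrt (2 * S))" by simp
  qed
  then have "bounded {p :: 'n phase_space. test_fn \<omega> \<gamma> R S p \<noteq> 0}"
    by (rule bounded_subset[OF bounded_cball])
  then have "compact (closure {p :: 'n phase_space. test_fn \<omega> \<gamma> R S p \<noteq> 0})"
    by (simp add: compact_eq_bounded_closed bounded_closure)
  ultimately show ?thesis unfolding test_fun_def by simp
qed

lemma continuous_on_cutoff [continuous_intros]:
  "continuous_on S f \<Longrightarrow> continuous_on S (\<lambda>x. cutoff (f x))"
  "continuous_on S f \<Longrightarrow> continuous_on S (\<lambda>x. cutoff' (f x))"
  "continuous_on S f \<Longrightarrow> continuous_on S (\<lambda>x. cutoff'' (f x))"
  using DERIV_isCont[OF cutoff_has_real_derivative] DERIV_isCont[OF cutoff'_has_real_derivative]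
    isCont_cutoff''
  by (auto intro!: continuous_on_compose2[of UNIV _ S f] continuous_at_imp_continuous_on)

lemma QFP_adj_test_fn:
  fixes p :: "'n::finite phase_space" and \<omega> \<gamma> R S :: real
  assumes R: "R \<noteq> 0"
  defines "\<Phi> \<equiv> energy \<omega> \<gamma> p" and "v \<equiv> (norm p)\<^sup>2 / S"
  shows "QFP_adj \<omega> \<gamma> Dpp Dqq Dpq (test_fn \<omega> \<gamma> R S) p =
      trunc' R \<Phi> * cutoff v * adj_energy \<omega> \<gamma> Dpp Dqq Dpq p
    + trunc R \<Phi> * (cutoff' v / S) * adj_norm_square \<omega> \<gamma> Dpp Dqq p
    - trunc'' R \<Phi> * cutoff v * diffusion_form Dpp Dqq Dpq (energy_grad \<omega> \<gamma> p) (energy_grad \<omega> \<gamma> p)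
    - 2 * trunc' R \<Phi> * (cutoff' v / S) * diffusion_form Dpp Dqq Dpq (energy_grad \<omega> \<gamma> p) (2 *\<^sub>R p)
    - trunc R \<Phi> * (cutoff'' v / S\<^sup>2) * diffusion_form Dpp Dqq Dpq (2 *\<^sub>R p) (2 *\<^sub>R p)"
  unfolding test_fn_def[abs_def] \<Phi>_def v_def
  by (rule QFP_adj_comp_energy_norm[OF trunc_has_real_derivative[OF R]
        cutoff_scaled_has_real_derivative(1) cutoff_scaled_derivs_has_real_derivative])

lemma QFP_adj_trunc_energy:
  fixes p :: "'n::finite phase_space" and \<omega> \<gamma> R :: real
  assumes R: "R \<noteq> 0"
  defines "\<Phi> \<equiv> energy \<omega> \<gamma> p"
  shows "QFP_adj \<omega> \<gamma> Dpp Dqq Dpq (\<lambda>p. trunc R (energy \<omega> \<gamma> p)) p =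
      trunc' R \<Phi> * adj_energy \<omega> \<gamma> Dpp Dqq Dpq p
    - trunc'' R \<Phi> * diffusion_form Dpp Dqq Dpq (energy_grad \<omega> \<gamma> p) (energy_grad \<omega> \<gamma> p)"
  using QFP_adj_comp_energy_norm[OF trunc_has_real_derivative[OF R], of "\<lambda>_. 1" "\<lambda>_. 0" "\<lambda>_. 0"]
  by (simp add: \<Phi>_def)

lemma continuous_on_QFP_adj_test_fn:
  assumes "R \<noteq> 0"
  shows "continuous_on UNIV (QFP_adj \<omega> \<gamma> Dpp Dqq Dpq (test_fn \<omega> \<gamma> R S) :: 'n::finite phase_space \<Rightarrow> real)"
  apply (rule continuous_on_cong[OF refl, THEN iffD2], rule QFP_adj_test_fn[OF assms])
  unfolding trunc_def trunc'_def trunc''_def adj_energy_def adj_norm_square_def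
    diffusion_form_def energy_def energy_grad_def divide_inverse
  by (intro continuous_intros)

lemma continuous_on_QFP_adj_trunc_energy:
  assumes "R \<noteq> 0"
  shows "continuous_on UNIV (QFP_adj \<omega> \<gamma> Dpp Dqq Dpq (\<lambda>p. trunc R (energy \<omega> \<gamma> p)) :: 'n::finite phase_space \<Rightarrow> real)"
  apply (rule continuous_on_cong[OF refl, THEN iffD2], rule QFP_adj_trunc_energy[OF assms])
  unfolding trunc'_def trunc''_def adj_energy_def
    diffusion_form_def energy_def energy_grad_def divide_inverse
  by (intro continuous_intros)

section \<open>Uniform bounds\<close>

lemma abs_mult_le_mult: "\<bar>a\<bar> \<le> A \<Longrightarrow> \<bar>b\<bar> \<le> B \<Longrightarrow> \<bar>a * b\<bar> \<le> A * (B::real)"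
  by (simp add: abs_mult mult_mono' order.trans[OF abs_ge_zero])

lemma abs_mult_le_weighted:
  fixes b x q C M :: real
  assumes "\<bar>x\<bar> \<le> C * q" and "\<bar>q * b\<bar> \<le> M" and "q \<ge> 0" and "C \<ge> 0"
  shows "\<bar>b * x\<bar> \<le> C * M"
proof -
  have "\<bar>b * x\<bar> \<le> \<bar>b\<bar> * (C * q)" unfolding abs_mult using assms(1) by (rule mult_left_mono) simp
  also have "\<dots> = C * \<bar>q * b\<bar>" using assms(3) by (simp add: abs_mult)
  also have "\<dots> \<le> C * M" using assms(2,4) by (rule mult_left_mono)
  finally show ?thesis .
qed

lemma trunc_bounds:
  assumes M: "cutoff_moment_bound M"
    and "R > 0" "a \<ge> 0"
  shows "\<bar>trunc R a\<bar> \<le> R * M" and "\<bar>trunc' R a\<bar> \<le> 2 * M" and "\<bar>a * trunc'' R a\<bar> \<le> 3 * M"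
proof -
  define u where "u = a / R"
  have "u \<ge> 0" using assms by (simp add: u_def)
  then have "\<And>j. j \<le> 2 \<Longrightarrow> \<bar>u ^ j * cutoff u\<bar> \<le> M \<and> \<bar>u ^ j * cutoff' u\<bar> \<le> M \<and> \<bar>u ^ j * cutoff'' u\<bar> \<le> M"
    using M unfolding cutoff_moment_bound_def by blast
  from this[of 0] this[of 1] this[of 2]
  have bounds: "\<bar>cutoff u\<bar> \<le> M" "\<bar>u * cutoff u\<bar> \<le> M" "\<bar>u * cutoff' u\<bar> \<le> M"
    "\<bar>u\<^sup>2 * cutoff'' u\<bar> \<le> M"
    by simp_all
  have "trunc R a = R * (u * cutoff u)" "trunc' R a = cutoff u + u * cutoff' u"
    "a * trunc'' R a = 2 * (u * cutoff' u) + u\<^sup>2 * cutoff'' u"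
    using assms by (simp_all add: u_def trunc_def trunc'_def trunc''_def power2_eq_square field_simps)
  then show "\<bar>trunc R a\<bar> \<le> R * M" "\<bar>trunc' R a\<bar> \<le> 2 * M" "\<bar>a * trunc'' R a\<bar> \<le> 3 * M"
    using bounds abs_triangle_ineq[of "cutoff u" "u * cutoff' u"]
      abs_triangle_ineq[of "2 * (u * cutoff' u)" "u\<^sup>2 * cutoff'' u"] \<open>R > 0\<close>
    by (auto simp: abs_mult)
qed

lemma scaled_cutoff_bounds:
  assumes M: "cutoff_moment_bound M"
    and "S \<ge> 1" "b \<ge> 0"
  shows "\<bar>cutoff (b / S)\<bar> \<le> M" and "\<bar>cutoff' (b / S) / S\<bar> \<le> M"
    and "\<bar>b * (cutoff' (b / S) / S)\<bar> \<le> M" and "\<bar>b * (cutoff'' (b / S) / S\<^sup>2)\<bar> \<le> M"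
proof -
  define v where "v = b / S"
  have "v \<ge> 0" using assms by (simp add: v_def)
  then have "\<And>j. j \<le> 2 \<Longrightarrow> \<bar>v ^ j * cutoff v\<bar> \<le> M \<and> \<bar>v ^ j * cutoff' v\<bar> \<le> M \<and> \<bar>v ^ j * cutoff'' v\<bar> \<le> M"
    using M unfolding cutoff_moment_bound_def by blast
  from this[of 0] this[of 1]
  have bounds: "\<bar>cutoff v\<bar> \<le> M" "\<bar>cutoff' v\<bar> \<le> M" "\<bar>v * cutoff' v\<bar> \<le> M" "\<bar>v * cutoff'' v\<bar> \<le> M"
    by simp_all
  have shrink: "\<bar>c / S\<bar> \<le> \<bar>c\<bar>" for c
  proof -
    have "\<bar>c\<bar> / S \<le> \<bar>c\<bar> / 1" using assms by (intro divide_left_mono) auto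
    then show ?thesis using assms by simp
  qed
  have "b * (cutoff' (b / S) / S) = v * cutoff' v" "b * (cutoff'' (b / S) / S\<^sup>2) = (v * cutoff'' v) / S"
    using assms by (simp_all add: v_def power2_eq_square)
  then show "\<bar>cutoff (b / S)\<bar> \<le> M" "\<bar>cutoff' (b / S) / S\<bar> \<le> M"
    "\<bar>b * (cutoff' (b / S) / S)\<bar> \<le> M" "\<bar>b * (cutoff'' (b / S) / S\<^sup>2)\<bar> \<le> M"
    using bounds shrink[of "cutoff' v"] shrink[of "v * cutoff'' v"] unfolding v_def by auto
qed

lemma diffusion_form_bound:
  fixes g h :: "'n::finite phase_space"
  shows "\<bar>diffusion_form Dpp Dqq Dpq g h\<bar> \<le> (\<bar>Dpp\<bar> + \<bar>Dqq\<bar> + 2 * \<bar>Dpq\<bar>) * (norm g * norm h)"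
proof -
  let ?N = "norm g * norm h"
  have inner_le: "\<bar>a \<bullet> b\<bar> \<le> ?N" if "norm a \<le> norm g" "norm b \<le> norm h" for a b :: "real^'n"
  proof -
    have "\<bar>a \<bullet> b\<bar> \<le> norm a * norm b" by (rule Cauchy_Schwarz_ineq2)
    also have "\<dots> \<le> ?N" using that by (intro mult_mono) auto
    finally show ?thesis .
  qed
  have nf: "norm (fst k) \<le> norm k" and ns: "norm (snd k) \<le> norm k" for k :: "'n phase_space"
    using norm_fst_le[of "fst k" "snd k"] norm_snd_le[of "snd k" "fst k"] by simp_all
  have "\<bar>snd g \<bullet> snd h\<bar> \<le> ?N" "\<bar>fst g \<bullet> fst h\<bar> \<le> ?N"
    and mixed: "\<bar>fst g \<bullet> snd h\<bar> \<le> ?N" "\<bar>snd g \<bullet> fst h\<bar> \<le> ?N"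
    by (intro inner_le nf ns)+
  then have "\<bar>Dpp * (snd g \<bullet> snd h)\<bar> \<le> \<bar>Dpp\<bar> * ?N" "\<bar>Dqq * (fst g \<bullet> fst h)\<bar> \<le> \<bar>Dqq\<bar> * ?N"
    by (simp_all add: abs_mult mult_left_mono)
  moreover have "\<bar>fst g \<bullet> snd h + snd g \<bullet> fst h\<bar> \<le> 2 * ?N"
    using mixed abs_triangle_ineq[of "fst g \<bullet> snd h" "snd g \<bullet> fst h"] by linarith
  then have "\<bar>Dpq\<bar> * \<bar>fst g \<bullet> snd h + snd g \<bullet> fst h\<bar> \<le> \<bar>Dpq\<bar> * (2 * ?N)"
    by (rule mult_left_mono) simp
  then have "\<bar>Dpq * (fst g \<bullet> snd h + snd g \<bullet> fst h)\<bar> \<le> 2 * \<bar>Dpq\<bar> * ?N"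
    by (simp add: abs_mult mult_ac)
  ultimately show ?thesis
    unfolding diffusion_form_def distrib_right
    using abs_triangle_ineq[of "Dpp * (snd g \<bullet> snd h) + Dqq * (fst g \<bullet> fst h)"
        "Dpq * (fst g \<bullet> snd h + snd g \<bullet> fst h)"]
      abs_triangle_ineq[of "Dpp * (snd g \<bullet> snd h)" "Dqq * (fst g \<bullet> fst h)"]
    by linarith
qed

lemma norm_energy_grad_square_le:
  "(norm (energy_grad \<omega> \<gamma> p))\<^sup>2 \<le> (8 * \<omega>\<^sup>2 + 32 * \<gamma>\<^sup>2 + 4) * energy \<omega> \<gamma> p"
proof -
  define x b where "x = fst p" and "b = (2 * \<gamma>) *\<^sub>R fst p + snd p"
  define u v where "u = (2 * \<omega>\<^sup>2) *\<^sub>R x" and "v = (4 * \<gamma>) *\<^sub>R b"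
  have "(norm (energy_grad \<omega> \<gamma> p))\<^sup>2 = (u + v) \<bullet> (u + v) + 4 * (b \<bullet> b)"
    by (simp add: power2_norm_eq_inner energy_grad_def inner_prod_def x_def b_def u_def v_def)
  moreover have "(u + v) \<bullet> (u + v) \<le> 2 * (u \<bullet> u) + 2 * (v \<bullet> v)"
    using inner_ge_zero[of "u - v"] by (simp add: inner_diff inner_add inner_commute)
  moreover have "u \<bullet> u = 4 * \<omega>\<^sup>2 * (\<omega>\<^sup>2 * (x \<bullet> x))" "v \<bullet> v = 16 * \<gamma>\<^sup>2 * (b \<bullet> b)"
    by (simp_all add: u_def v_def power2_eq_square)
  ultimately have "(norm (energy_grad \<omega> \<gamma> p))\<^sup>2
      \<le> 8 * \<omega>\<^sup>2 * (\<omega>\<^sup>2 * (x \<bullet> x)) + (32 * \<gamma>\<^sup>2 + 4) * (b \<bullet> b)"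
    by (simp add: algebra_simps)
  also have "\<dots> \<le> (8 * \<omega>\<^sup>2 + 32 * \<gamma>\<^sup>2 + 4) * (\<omega>\<^sup>2 * (x \<bullet> x) + b \<bullet> b)"
  proof -
    have "0 \<le> 8 * \<omega>\<^sup>2 * (b \<bullet> b) + (32 * \<gamma>\<^sup>2 + 4) * (\<omega>\<^sup>2 * (x \<bullet> x))"
      by (intro add_nonneg_nonneg mult_nonneg_nonneg) auto
    then show ?thesis by (simp add: algebra_simps)
  qed
  finally show ?thesis by (simp add: energy_def x_def b_def)
qed

lemma abs_inner_fst_snd_le: "\<bar>fst p \<bullet> snd p\<bar> \<le> (norm p)\<^sup>2"
proof -
  have "\<bar>fst p \<bullet> snd p\<bar> \<le> norm (fst p) * norm (snd p)" by (rule Cauchy_Schwarz_ineq2)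
  also have "\<dots> \<le> norm p * norm p"
    using norm_fst_le[of "fst p" "snd p"] norm_snd_le[of "snd p" "fst p"] by (intro mult_mono) auto
  finally show ?thesis by (simp add: power2_eq_square)
qed

lemma abs_adj_norm_square_le:
  "\<bar>adj_norm_square \<omega> \<gamma> Dpp Dqq p\<bar>
     \<le> (\<bar>2 * \<omega>\<^sup>2 - 2\<bar> + 4 * \<bar>\<gamma>\<bar>) * (norm p)\<^sup>2 + 2 * real CARD('n) * \<bar>Dpp + Dqq\<bar>"
  for p :: "'n::finite phase_space"
proof -
  have "snd p \<bullet> snd p \<le> (norm p)\<^sup>2"
    using norm_snd_le[of "snd p" "fst p"] by (simp add: power2_norm_eq_inner[symmetric] power_mono)
  then show ?thesis
    unfolding adj_norm_square_def using abs_inner_fst_snd_le[of p]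
    by (auto simp: abs_mult distrib_right intro!: order.trans[OF abs_triangle_ineq4]
        order.trans[OF abs_triangle_ineq] add_mono mult_left_mono)
qed

lemma abs_diffusion_form_energy_grad_le:
  "\<bar>diffusion_form Dpp Dqq Dpq (energy_grad \<omega> \<gamma> p) (energy_grad \<omega> \<gamma> p)\<bar>
     \<le> (\<bar>Dpp\<bar> + \<bar>Dqq\<bar> + 2 * \<bar>Dpq\<bar>) * (8 * \<omega>\<^sup>2 + 32 * \<gamma>\<^sup>2 + 4) * energy \<omega> \<gamma> p"
proof -
  have "\<bar>diffusion_form Dpp Dqq Dpq (energy_grad \<omega> \<gamma> p) (energy_grad \<omega> \<gamma> p)\<bar>
      \<le> (\<bar>Dpp\<bar> + \<bar>Dqq\<bar> + 2 * \<bar>Dpq\<bar>) * (norm (energy_grad \<omega> \<gamma> p))\<^sup>2"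
    using diffusion_form_bound by (simp add: power2_eq_square)
  also have "\<dots> \<le> (\<bar>Dpp\<bar> + \<bar>Dqq\<bar> + 2 * \<bar>Dpq\<bar>) * ((8 * \<omega>\<^sup>2 + 32 * \<gamma>\<^sup>2 + 4) * energy \<omega> \<gamma> p)"
    by (intro mult_left_mono norm_energy_grad_square_le) simp
  finally show ?thesis by (simp add: mult.assoc)
qed

lemma QFP_coefficients_bounded:
  "\<exists>C\<ge>0. \<forall>p::'n::finite phase_space.
     \<bar>diffusion_form Dpp Dqq Dpq (energy_grad \<omega> \<gamma> p) (energy_grad \<omega> \<gamma> p)\<bar> \<le> C * energy \<omega> \<gamma> p \<and>
     \<bar>diffusion_form Dpp Dqq Dpq (energy_grad \<omega> \<gamma> p) (2 *\<^sub>R p)\<bar> \<le> C * (norm p)\<^sup>2 \<and>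
     \<bar>diffusion_form Dpp Dqq Dpq (2 *\<^sub>R p) (2 *\<^sub>R p)\<bar> \<le> C * (norm p)\<^sup>2 \<and>
     \<bar>adj_norm_square \<omega> \<gamma> Dpp Dqq p\<bar> \<le> C * ((norm p)\<^sup>2 + 1)"
proof -
  obtain L where L: "\<And>p::'n phase_space. norm (energy_grad \<omega> \<gamma> p) \<le> norm p * L" "L > 0"
    using bounded_linear.pos_bounded[OF bounded_linear_energy_grad] by blast
  define CD where "CD = \<bar>Dpp\<bar> + \<bar>Dqq\<bar> + 2 * \<bar>Dpq\<bar>"
  define C where "C = CD * (8 * \<omega>\<^sup>2 + 32 * \<gamma>\<^sup>2 + 4) + 2 * CD * L + 4 * CD
    + \<bar>2 * \<omega>\<^sup>2 - 2\<bar> + 4 * \<bar>\<gamma>\<bar> + 2 * real CARD('n) * \<bar>Dpp + Dqq\<bar>"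
  have "CD \<ge> 0" by (simp add: CD_def)
  then have C_ge: "CD * (8 * \<omega>\<^sup>2 + 32 * \<gamma>\<^sup>2 + 4) \<le> C" "2 * CD * L \<le> C" "4 * CD \<le> C"
    "\<bar>2 * \<omega>\<^sup>2 - 2\<bar> + 4 * \<bar>\<gamma>\<bar> \<le> C" "2 * real CARD('n) * \<bar>Dpp + Dqq\<bar> \<le> C" "C \<ge> 0"
    using L(2) by (simp_all add: C_def)
  have "\<bar>diffusion_form Dpp Dqq Dpq (energy_grad \<omega> \<gamma> p) (energy_grad \<omega> \<gamma> p)\<bar> \<le> C * energy \<omega> \<gamma> p"
    for p :: "'n phase_space"
    using abs_diffusion_form_energy_grad_le[of Dpp Dqq Dpq \<omega> \<gamma> p]
      mult_right_mono[OF C_ge(1) energy_nonneg[of \<omega> \<gamma> p]] unfolding CD_def by linarith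
  moreover have "\<bar>diffusion_form Dpp Dqq Dpq (energy_grad \<omega> \<gamma> p) (2 *\<^sub>R p)\<bar> \<le> C * (norm p)\<^sup>2"
    for p :: "'n phase_space"
  proof -
    have "\<bar>diffusion_form Dpp Dqq Dpq (energy_grad \<omega> \<gamma> p) (2 *\<^sub>R p)\<bar>
        \<le> CD * (norm (energy_grad \<omega> \<gamma> p) * (2 * norm p))"
      using diffusion_form_bound[of Dpp Dqq Dpq "energy_grad \<omega> \<gamma> p" "2 *\<^sub>R p"] by (simp add: CD_def)
    also have "\<dots> \<le> CD * (norm p * L * (2 * norm p))"
      using \<open>CD \<ge> 0\<close> L(1)[of p] by (intro mult_left_mono mult_right_mono) auto
    also have "\<dots> = (2 * CD * L) * (norm p)\<^sup>2" by (simp add: power2_eq_square)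
    also have "\<dots> \<le> C * (norm p)\<^sup>2" using C_ge(2) by (rule mult_right_mono) simp
    finally show ?thesis .
  qed
  moreover have "\<bar>diffusion_form Dpp Dqq Dpq (2 *\<^sub>R p) (2 *\<^sub>R p)\<bar> \<le> C * (norm p)\<^sup>2"
    for p :: "'n phase_space"
  proof -
    have "\<bar>diffusion_form Dpp Dqq Dpq (2 *\<^sub>R p) (2 *\<^sub>R p)\<bar> \<le> 4 * CD * (norm p)\<^sup>2"
      using diffusion_form_bound[of Dpp Dqq Dpq "2 *\<^sub>R p" "2 *\<^sub>R p"]
      by (simp add: CD_def power2_eq_square algebra_simps)
    also have "\<dots> \<le> C * (norm p)\<^sup>2" using C_ge(3) by (rule mult_right_mono) simp
    finally show ?thesis .
  qed
  moreover have "\<bar>adj_norm_square \<omega> \<gamma> Dpp Dqq p\<bar> \<le> C * ((norm p)\<^sup>2 + 1)" for p :: "'n phase_space"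
    using abs_adj_norm_square_le[of \<omega> \<gamma> Dpp Dqq p] mult_right_mono[OF C_ge(4), of "(norm p)\<^sup>2"] C_ge(5)
    by (simp add: distrib_left)
  ultimately show ?thesis using C_ge(6) by blast
qed

lemma QFP_adj_test_fn_bounded:
  assumes "\<gamma> * \<omega> = 0" and "R \<ge> 1"
  shows "\<exists>B. \<forall>S\<ge>1. \<forall>p::'n::finite phase_space. \<bar>QFP_adj \<omega> \<gamma> Dpp Dqq Dpq (test_fn \<omega> \<gamma> R S) p\<bar> \<le> B"
proof -
  obtain M where M: "cutoff_moment_bound M"
    using cutoff_moment_bound_exists by blast
  obtain C where C11: "\<And>p::'n phase_space.
      \<bar>diffusion_form Dpp Dqq Dpq (energy_grad \<omega> \<gamma> p) (energy_grad \<omega> \<gamma> p)\<bar> \<le> C * energy \<omega> \<gamma> p"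
    and C12: "\<And>p::'n phase_space. \<bar>diffusion_form Dpp Dqq Dpq (energy_grad \<omega> \<gamma> p) (2 *\<^sub>R p)\<bar> \<le> C * (norm p)\<^sup>2"
    and C22: "\<And>p::'n phase_space. \<bar>diffusion_form Dpp Dqq Dpq (2 *\<^sub>R p) (2 *\<^sub>R p)\<bar> \<le> C * (norm p)\<^sup>2"
    and C2: "\<And>p::'n phase_space. \<bar>adj_norm_square \<omega> \<gamma> Dpp Dqq p\<bar> \<le> C * ((norm p)\<^sup>2 + 1)"
    and "C \<ge> 0"
    using QFP_coefficients_bounded by blast
  define c where "c = \<bar>real CARD('n) * (2 * Dpp + Dqq * (2 * \<omega>\<^sup>2 + 8 * \<gamma>\<^sup>2) + 8 * \<gamma> * Dpq)\<bar>"
  define B where "B = 2 * M * M * c + R * M * (C * (2 * M)) + M * (C * (3 * M)) + 4 * M * (C * M)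
    + R * M * (C * M)"
  have "\<bar>QFP_adj \<omega> \<gamma> Dpp Dqq Dpq (test_fn \<omega> \<gamma> R S) p\<bar> \<le> B" if "S \<ge> 1" for S and p :: "'n phase_space"
  proof -
    define \<Phi> v where "\<Phi> = energy \<omega> \<gamma> p" and "v = (norm p)\<^sup>2 / S"
    have "\<Phi> \<ge> 0" "R > 0" using assms by (simp_all add: \<Phi>_def energy_nonneg)
    note T = trunc_bounds[OF M \<open>R > 0\<close> \<open>\<Phi> \<ge> 0\<close>]
    note K = scaled_cutoff_bounds[OF M \<open>S \<ge> 1\<close> zero_le_power2[of "norm p"], folded v_def]
    have "\<bar>2 * trunc' R \<Phi>\<bar> \<le> 4 * M" using T(2) by simp
    have "\<bar>(norm p)\<^sup>2 * (cutoff' v / S) + cutoff' v / S\<bar> \<le> M + M"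
      by (rule order.trans[OF abs_triangle_ineq add_mono[OF K(3) K(2)]])
    then have "\<bar>((norm p)\<^sup>2 + 1) * (cutoff' v / S)\<bar> \<le> 2 * M" by (simp only: distrib_right mult_1 mult_2)
    have "\<bar>trunc' R \<Phi> * cutoff v * adj_energy \<omega> \<gamma> Dpp Dqq Dpq p\<bar> \<le> 2 * M * M * c"
      using T(2) K(1) adj_energy_degenerate[OF assms(1), of Dpp Dqq Dpq p]
      by (intro abs_mult_le_mult) (auto simp: c_def)
    moreover have "\<bar>trunc R \<Phi> * ((cutoff' v / S) * adj_norm_square \<omega> \<gamma> Dpp Dqq p)\<bar> \<le> R * M * (C * (2 * M))"
      by (rule abs_mult_le_mult[OF T(1) abs_mult_le_weighted[OF C2 \<open>\<bar>_ * (cutoff' v / S)\<bar> \<le> 2 * M\<close> _ \<open>C \<ge> 0\<close>]])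
        simp
    moreover have "\<bar>trunc'' R \<Phi> * cutoff v * diffusion_form Dpp Dqq Dpq (energy_grad \<omega> \<gamma> p) (energy_grad \<omega> \<gamma> p)\<bar>
        \<le> M * (C * (3 * M))"
      using abs_mult_le_mult[OF K(1) abs_mult_le_weighted[OF C11[of p, folded \<Phi>_def] T(3) \<open>\<Phi> \<ge> 0\<close> \<open>C \<ge> 0\<close>]]
      by (simp only: mult.assoc mult.left_commute[of "trunc'' R \<Phi>" "cutoff v"])
    moreover have "\<bar>2 * trunc' R \<Phi> * (cutoff' v / S * diffusion_form Dpp Dqq Dpq (energy_grad \<omega> \<gamma> p) (2 *\<^sub>R p))\<bar>
        \<le> 4 * M * (C * M)"
      by (rule abs_mult_le_mult[OF \<open>\<bar>2 * trunc' R \<Phi>\<bar> \<le> 4 * M\<close>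
            abs_mult_le_weighted[OF C12 K(3) zero_le_power2 \<open>C \<ge> 0\<close>]])
    moreover have "\<bar>trunc R \<Phi> * (cutoff'' v / S\<^sup>2 * diffusion_form Dpp Dqq Dpq (2 *\<^sub>R p) (2 *\<^sub>R p))\<bar>
        \<le> R * M * (C * M)"
      by (rule abs_mult_le_mult[OF T(1) abs_mult_le_weighted[OF C22 K(4) zero_le_power2 \<open>C \<ge> 0\<close>]])
    ultimately show ?thesis
      unfolding QFP_adj_test_fn[OF \<open>R > 0\<close>[THEN less_imp_neq, symmetric]] \<Phi>_def v_def B_def mult.assoc
      by (simp only: abs_le_iff) linarith
  qed
  then show ?thesis by blast
qed

lemma QFP_adj_trunc_energy_bounded:
  assumes "\<gamma> * \<omega> = 0"
  shows "\<exists>B. \<forall>R\<ge>1. \<forall>p::'n::finite phase_space.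
           \<bar>QFP_adj \<omega> \<gamma> Dpp Dqq Dpq (\<lambda>p. trunc R (energy \<omega> \<gamma> p)) p\<bar> \<le> B"
proof -
  obtain M where M: "cutoff_moment_bound M"
    using cutoff_moment_bound_exists by blast
  obtain C where C11: "\<And>p::'n phase_space.
      \<bar>diffusion_form Dpp Dqq Dpq (energy_grad \<omega> \<gamma> p) (energy_grad \<omega> \<gamma> p)\<bar> \<le> C * energy \<omega> \<gamma> p"
    and "C \<ge> 0"
    using QFP_coefficients_bounded by blast
  define c where "c = \<bar>real CARD('n) * (2 * Dpp + Dqq * (2 * \<omega>\<^sup>2 + 8 * \<gamma>\<^sup>2) + 8 * \<gamma> * Dpq)\<bar>"
  have "\<bar>QFP_adj \<omega> \<gamma> Dpp Dqq Dpq (\<lambda>p. trunc R (energy \<omega> \<gamma> p)) p\<bar> \<le> 2 * M * c + C * (3 * M)"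
    if "R \<ge> 1" for R and p :: "'n phase_space"
  proof -
    have "R > 0" using that by simp
    note T = trunc_bounds[OF M \<open>R > 0\<close> energy_nonneg[of \<omega> \<gamma> p]]
    have "\<bar>trunc' R (energy \<omega> \<gamma> p) * adj_energy \<omega> \<gamma> Dpp Dqq Dpq p\<bar> \<le> 2 * M * c"
      using T(2) adj_energy_degenerate[OF assms(1), of Dpp Dqq Dpq p]
      by (intro abs_mult_le_mult) (auto simp: c_def)
    moreover have
      "\<bar>trunc'' R (energy \<omega> \<gamma> p) * diffusion_form Dpp Dqq Dpq (energy_grad \<omega> \<gamma> p) (energy_grad \<omega> \<gamma> p)\<bar>
        \<le> C * (3 * M)"
      by (rule abs_mult_le_weighted[OF C11 T(3) energy_nonneg \<open>C \<ge> 0\<close>])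
    ultimately show ?thesis
      unfolding QFP_adj_trunc_energy[OF \<open>R > 0\<close>[THEN less_imp_neq, symmetric]]
      by (simp only: abs_le_iff) linarith
  qed
  then show ?thesis by blast
qed

section \<open>Passage to the limit\<close>

lemma QFP_adj_test_fn_eq_trunc_energy:
  assumes "R \<noteq> 0" "S > 0" "(norm p)\<^sup>2 < S"
  shows "QFP_adj \<omega> \<gamma> Dpp Dqq Dpq (test_fn \<omega> \<gamma> R S) p
       = QFP_adj \<omega> \<gamma> Dpp Dqq Dpq (\<lambda>p. trunc R (energy \<omega> \<gamma> p)) p"
proof -
  have "(norm p)\<^sup>2 / S < 1" using assms by simp
  then show ?thesis
    using assms by (simp add: QFP_adj_test_fn QFP_adj_trunc_energy cutoff_eq_1 cutoff'_cutoff''_eq_0)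
qed

lemma QFP_adj_trunc_energy_eq_adj_energy:
  assumes "R > 0" "energy \<omega> \<gamma> p < R"
  shows "QFP_adj \<omega> \<gamma> Dpp Dqq Dpq (\<lambda>p. trunc R (energy \<omega> \<gamma> p)) p = adj_energy \<omega> \<gamma> Dpp Dqq Dpq p"
proof -
  have "energy \<omega> \<gamma> p / R < 1" using assms by simp
  then show ?thesis
    using assms by (simp add: QFP_adj_trunc_energy trunc'_def trunc''_def cutoff_eq_1 cutoff'_cutoff''_eq_0)
qed

lemma integral_eq_0_dominated_limit:
  fixes w :: "'a::euclidean_space \<Rightarrow> real"
  assumes w: "integrable lebesgue w"
    and cont: "\<And>n. continuous_on UNIV (f n)" "continuous_on UNIV g"
    and zero: "\<And>n. (\<integral>p. w p * f n p \<partial>lebesgue) = 0"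
    and lim: "\<And>p. (\<lambda>n. f n p) \<longlonglongrightarrow> g p"
    and bound: "\<And>n p. \<bar>f n p\<bar> \<le> B"
  shows "(\<integral>p. w p * g p \<partial>lebesgue) = 0"
proof -
  have [measurable]: "w \<in> borel_measurable lebesgue" using w by (rule borel_measurable_integrable)
  have [measurable]: "f n \<in> borel_measurable lebesgue" "g \<in> borel_measurable lebesgue" for n
    using continuous_imp_measurable_on_sets_lebesgue[OF cont(1)[of n]]
      continuous_imp_measurable_on_sets_lebesgue[OF cont(2)] by (simp_all add: lebesgue_on_UNIV_eq)
  have "(\<lambda>n. \<integral>p. w p * f n p \<partial>lebesgue) \<longlonglongrightarrow> (\<integral>p. w p * g p \<partial>lebesgue)"
  proof (rule integral_dominated_convergence[where w="\<lambda>p. B * \<bar>w p\<bar>"])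
    show "integrable lebesgue (\<lambda>p. B * \<bar>w p\<bar>)" using w by (intro integrable_mult_right integrable_abs)
    show "AE p in lebesgue. (\<lambda>n. w p * f n p) \<longlonglongrightarrow> w p * g p"
      using lim by (intro AE_I2 tendsto_mult tendsto_const)
    show "AE p in lebesgue. norm (w p * f n p) \<le> B * \<bar>w p\<bar>" for n
      using mult_left_mono[OF bound, of "\<bar>w _\<bar>"] by (intro AE_I2) (simp add: abs_mult mult.commute)
  qed measurable
  then show ?thesis by (simp add: zero LIMSEQ_const_iff)
qed

lemma integral_QFP_adj_trunc_energy_eq_0:
  fixes w :: "'n::finite phase_space \<Rightarrow> real"
  assumes "\<gamma> * \<omega> = 0" and "R \<ge> 1"
    and w: "integrable lebesgue w" and stationary: "stationary_QFP \<omega> \<gamma> Dpp Dqq Dpq w"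
  shows "(\<integral>p. w p * QFP_adj \<omega> \<gamma> Dpp Dqq Dpq (\<lambda>p. trunc R (energy \<omega> \<gamma> p)) p \<partial>lebesgue) = 0"
proof -
  obtain B where B: "\<And>S (p :: 'n phase_space). S \<ge> 1 \<Longrightarrow> \<bar>QFP_adj \<omega> \<gamma> Dpp Dqq Dpq (test_fn \<omega> \<gamma> R S) p\<bar> \<le> B"
    using QFP_adj_test_fn_bounded[OF assms(1,2)] by blast
  have "R \<noteq> 0" using assms(2) by simp
  show ?thesis
  proof (rule integral_eq_0_dominated_limit[OF w])
    fix n :: nat
    show "continuous_on UNIV (QFP_adj \<omega> \<gamma> Dpp Dqq Dpq (test_fn \<omega> \<gamma> R (Suc n)) :: 'n phase_space \<Rightarrow> real)"
      by (rule continuous_on_QFP_adj_test_fn[OF \<open>R \<noteq> 0\<close>])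
    have "test_fun (test_fn \<omega> \<gamma> R (Suc n) :: 'n phase_space \<Rightarrow> real)"
      using assms(2) by (intro test_fun_test_fn) auto
    then show "(\<integral>p. w p * QFP_adj \<omega> \<gamma> Dpp Dqq Dpq (test_fn \<omega> \<gamma> R (Suc n)) p \<partial>lebesgue) = 0"
      using stationary unfolding stationary_QFP_def by blast
    show "\<bar>QFP_adj \<omega> \<gamma> Dpp Dqq Dpq (test_fn \<omega> \<gamma> R (Suc n)) p\<bar> \<le> B" for p :: "'n phase_space"
      by (rule B) simp
  next
    show "continuous_on UNIV (QFP_adj \<omega> \<gamma> Dpp Dqq Dpq (\<lambda>p. trunc R (energy \<omega> \<gamma> p)) :: 'n phase_space \<Rightarrow> real)"
      by (rule continuous_on_QFP_adj_trunc_energy[OF \<open>R \<noteq> 0\<close>])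
    fix p :: "'n phase_space"
    obtain N :: nat where "(norm p)\<^sup>2 < real N" using reals_Archimedean2 by blast
    then have "\<forall>n\<ge>N. QFP_adj \<omega> \<gamma> Dpp Dqq Dpq (test_fn \<omega> \<gamma> R (Suc n)) p
        = QFP_adj \<omega> \<gamma> Dpp Dqq Dpq (\<lambda>p. trunc R (energy \<omega> \<gamma> p)) p"
      using \<open>R \<noteq> 0\<close> by (auto intro!: QFP_adj_test_fn_eq_trunc_energy)
    then show "(\<lambda>n. QFP_adj \<omega> \<gamma> Dpp Dqq Dpq (test_fn \<omega> \<gamma> R (Suc n)) p)
        \<longlonglongrightarrow> QFP_adj \<omega> \<gamma> Dpp Dqq Dpq (\<lambda>p. trunc R (energy \<omega> \<gamma> p)) p"
      by (intro tendsto_eventually) (auto simp: eventually_sequentially)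
  qed
qed

lemma integral_adj_energy_eq_0:
  fixes w :: "'n::finite phase_space \<Rightarrow> real"
  assumes "\<gamma> * \<omega> = 0" and w: "integrable lebesgue w" and "stationary_QFP \<omega> \<gamma> Dpp Dqq Dpq w"
  shows "(\<integral>p. w p * adj_energy \<omega> \<gamma> Dpp Dqq Dpq p \<partial>lebesgue) = 0"
proof -
  obtain B where B: "\<And>R (p :: 'n phase_space). R \<ge> 1 \<Longrightarrow> \<bar>QFP_adj \<omega> \<gamma> Dpp Dqq Dpq (\<lambda>p. trunc R (energy \<omega> \<gamma> p)) p\<bar> \<le> B"
    using QFP_adj_trunc_energy_bounded[OF assms(1)] by blast
  show ?thesis
  proof (rule integral_eq_0_dominated_limit[OF w])
    fix n :: nat
    show "continuous_on UNIV (QFP_adj \<omega> \<gamma> Dpp Dqq Dpq (\<lambda>p. trunc (Suc n) (energy \<omega> \<gamma> p)) :: 'n phase_space \<Rightarrow> real)"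
      by (rule continuous_on_QFP_adj_trunc_energy) simp
    show "(\<integral>p. w p * QFP_adj \<omega> \<gamma> Dpp Dqq Dpq (\<lambda>p. trunc (Suc n) (energy \<omega> \<gamma> p)) p \<partial>lebesgue) = 0"
      using assms by (intro integral_QFP_adj_trunc_energy_eq_0) auto
    show "\<bar>QFP_adj \<omega> \<gamma> Dpp Dqq Dpq (\<lambda>p. trunc (Suc n) (energy \<omega> \<gamma> p)) p\<bar> \<le> B" for p :: "'n phase_space"
      by (rule B) simp
  next
    show "continuous_on UNIV (adj_energy \<omega> \<gamma> Dpp Dqq Dpq :: 'n phase_space \<Rightarrow> real)"
      unfolding adj_energy_def[abs_def] by (intro continuous_intros)
    fix p :: "'n phase_space"
    obtain N :: nat where "energy \<omega> \<gamma> p < real N" using reals_Archimedean2 by blast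
    then have "\<forall>n\<ge>N. QFP_adj \<omega> \<gamma> Dpp Dqq Dpq (\<lambda>p. trunc (Suc n) (energy \<omega> \<gamma> p)) p
        = adj_energy \<omega> \<gamma> Dpp Dqq Dpq p"
      by (auto intro!: QFP_adj_trunc_energy_eq_adj_energy)
    then show "(\<lambda>n. QFP_adj \<omega> \<gamma> Dpp Dqq Dpq (\<lambda>p. trunc (Suc n) (energy \<omega> \<gamma> p)) p)
        \<longlonglongrightarrow> adj_energy \<omega> \<gamma> Dpp Dqq Dpq p"
      by (intro tendsto_eventually) (auto simp: eventually_sequentially)
  qed
qed

theorem corollary3p2:
  fixes \<omega>0 \<gamma> Dpp Dqq Dpq :: real
  assumes "\<omega>0 \<ge> 0" "\<gamma> \<ge> 0" "Dpp > 0" "Dqq \<ge> 0" "Dpq \<ge> 0"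
    and "Dpp * Dqq - Dpq\<^sup>2 \<ge> \<gamma>\<^sup>2 / 4"
  shows "(\<gamma> > 0 \<and> \<omega>0 > 0 \<longrightarrow>
            (\<forall>x :: real^'n::finite.
               integrable lborel (\<lambda>\<xi>. w_inf \<omega>0 \<gamma> Dpp Dqq Dpq x \<xi> *\<^sub>R \<xi>
                                     - Dqq *\<^sub>R grad_x (w_inf \<omega>0 \<gamma> Dpp Dqq Dpq) x \<xi>)
               \<and> current Dqq (w_inf \<omega>0 \<gamma> Dpp Dqq Dpq) x = 0))
       \<and> (\<omega>0 = 0 \<or> \<gamma> = 0 \<longrightarrow>
            \<not> (\<exists>w :: (real^'n) \<times> (real^'n) \<Rightarrow> real.
                  integrable lebesgue w \<and> (\<integral>p. w p \<partial>lebesgue) = 1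
                  \<and> stationary_QFP \<omega>0 \<gamma> Dpp Dqq Dpq w))"
proof (intro conjI impI)
  assume "\<gamma> > 0 \<and> \<omega>0 > 0"
  then show "\<forall>x :: real^'n. integrable lborel (\<lambda>\<xi>. w_inf \<omega>0 \<gamma> Dpp Dqq Dpq x \<xi> *\<^sub>R \<xi>
               - Dqq *\<^sub>R grad_x (w_inf \<omega>0 \<gamma> Dpp Dqq Dpq) x \<xi>)
             \<and> current Dqq (w_inf \<omega>0 \<gamma> Dpp Dqq Dpq) x = 0"
    using assms(2-5) current_w_inf_eq_zero by blast
next
  assume "\<omega>0 = 0 \<or> \<gamma> = 0"
  then have degenerate: "\<gamma> * \<omega>0 = 0" by auto
  define c where "c = real CARD('n) * (2 * Dpp + Dqq * (2 * \<omega>0\<^sup>2 + 8 * \<gamma>\<^sup>2) + 8 * \<gamma> * Dpq)"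
  have "c > 0" using assms by (simp add: c_def add_pos_nonneg)
  show "\<not> (\<exists>w :: 'n phase_space \<Rightarrow> real. integrable lebesgue w \<and> (\<integral>p. w p \<partial>lebesgue) = 1
           \<and> stationary_QFP \<omega>0 \<gamma> Dpp Dqq Dpq w)"
  proof (intro notI, elim exE conjE)
    fix w :: "'n phase_space \<Rightarrow> real"
    assume "integrable lebesgue w" "(\<integral>p. w p \<partial>lebesgue) = 1" "stationary_QFP \<omega>0 \<gamma> Dpp Dqq Dpq w"
    then have "0 = (\<integral>p. w p * adj_energy \<omega>0 \<gamma> Dpp Dqq Dpq p \<partial>lebesgue)"
      using integral_adj_energy_eq_0[OF degenerate] by simp
    also have "\<dots> = - c * (\<integral>p. w p \<partial>lebesgue)"
      by (simp add: adj_energy_degenerate[OF degenerate] c_def mult.commute)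
    finally show False using \<open>c > 0\<close> \<open>(\<integral>p. w p \<partial>lebesgue) = 1\<close> by simp
  qed
qed

end
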